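(* Let $\mathcal{U}=PC(\mathbb{R}_+,U)$ and let $\Sigma=(X,\mathcal{U},\phi)$ be a time-varying control system satisfying the BIC property. (a) If there exists a coercive iISS Lyapunov function for $\Sigma$, then $\Sigma$ is forward complete and iISS. (b) If there exists a coercive ISS Lyapunov function in dissipative form for $\Sigma$, then $\Sigma$ is ISS.
   Context: Comparison classes: $\mathcal{P}$ (continuous, zero at $0$, positive elsewhere), $\mathcal{K}$ (strictly increasing members of $\mathcal{P}$), $\mathcal{K}_\infty$ (unbounded members of $\mathcal{K}$), $\mathcal{KL}$ (continuous $\beta$ with $\beta(\cdot,t)\in\mathcal{K}$ and $\beta(r,\cdot)$ continuous, strictly decreasing to $0$ for $r>0$). $PC(\mathbb{R}_+,U)$ is the space of globally bounded, right-continuous, piecewise continuous functions $\mathbb{R}_+\to U$ (discontinuities without accumulation points), with norm $\|u\|_{\mathcal{U}}=\sup_{s\ge0}\|u(s)\|_U$. Control system. $\Sigma=(X,\mathcal{U},\phi)$ consists of a normed space $X$, an input space $\mathcal{U}$ of functions $\mathbb{R}_+\to U$ that is shift-invariant with $\|u(\cdot+\tau)\|_{\mathcal{U}}\le\|u\|_{\mathcal{U}}$, and a map $\phi(t,t_0,x_0,u)$ defined for $t\in[t_0,t_m(t_0,x_0,u))$ with $t_m\in(t_0,\infty]$. It satisfies: - identity: $\phi(t_0,t_0,x_0,u)=x_0$; - causality: $\phi(t,t_0,x_0,u)$ depends only on $u|_{[t_0,t)}$; - continuity in $t$; - cocycle: $\phi(t,\tau,\phi(\tau,t_0,x_0,u),u)=\phi(t,t_0,x_0,u)$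 for $t_0\le\tau\le t<t_m$. The system is forward complete if $t_m=\infty$ always. BIC: whenever $t_m<\infty$, the trajectory is unbounded on $[t_0,t_m)$. Lie derivative: $\dot V_u(t,x)=\limsup_{h\to0^+}\frac1h\big(V(t+h,\phi(t+h,t,x,u))-V(t,x)\big)$. Coercive iISS Lyapunov function. A continuous $V:\mathbb{R}_+\times X\to\mathbb{R}_+$ with $V(t,0)=0$ for which there exist $\alpha_1,\alpha_2\in\mathcal{K}_\infty$, $\eta\in\mathcal{P}$ and $\chi\in\mathcal{K}$ such that: - $\alpha_1(\|x\|_X)\le V(t,x)\le\alpha_2(\|x\|_X)$ for all $t\ge0$ and $x\in X$; - $\dot V_u(t,x)\le-\eta(\|x\|_X)+\chi(\|u(t)\|_U)$ for all $x\in X$, $u\in\mathcal{U}$ and $t\ge0$. If in addition $\lim_{\tau\to\infty}\eta(\tau)=\infty$ or $\liminf_{\tau\to\infty}\eta(\tau)\ge\lim_{\tau\to\infty}\chi(\tau)$, then $V$ is a coercive ISS Lyapunov function in dissipative form. iISS. $\Sigma$ (forward complete, with $\mathcal{U}=PC(\mathbb{R}_+,U)$) is iISS if there exist $\alpha\in\mathcal{K}_\infty$, $\mu\in\mathcal{K}$ and $\beta\in\mathcal{KL}$ such that for all $x_0$, $u$ and $t\ge t_0\ge0$: $$\|\phi(t,t_0,x_0,u)\|_X\le\beta(\|x_0\|_X,t-t_0)+\alpha\Big(\int_{t_0}^t\mu(\|u(s)\|_U)\,ds\Big).$$ ISS. There exist $\beta\in\mathcal{KL}$ and $\gamma\in\mathcal{K}$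 such that all trajectories exist on $[t_0,\infty)$ and $$\|\phi(t,t_0,x_0,u)\|_X\le\beta(\|x_0\|_X,t-t_0)+\gamma(\|u\|_{\mathcal{U}}).$$ *)

theory Defs
  imports "HOL-Analysis.Analysis"
begin

definition class_P :: "(real \<Rightarrow> real) \<Rightarrow> bool" where
  "class_P f \<longleftrightarrow> continuous_on {0..} f \<and> f 0 = 0 \<and> (\<forall>r>0. f r > 0)"

definition class_K :: "(real \<Rightarrow> real) \<Rightarrow> bool" where
  "class_K f \<longleftrightarrow> class_P f \<and> strict_mono_on {0..} f"

definition class_Kinf :: "(real \<Rightarrow> real) \<Rightarrow> bool" where
  "class_Kinf f \<longleftrightarrow> class_K f \<and> filterlim f at_top at_top"

definition class_KL :: "(real \<Rightarrow> real \<Rightarrow> real) \<Rightarrow> bool" where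
  "class_KL \<beta> \<longleftrightarrow>
     continuous_on ({0..} \<times> {0..}) (\<lambda>(r,t). \<beta> r t) \<and>
     (\<forall>t\<ge>0. class_K (\<lambda>r. \<beta> r t)) \<and>
     (\<forall>r>0. continuous_on {0..} (\<beta> r) \<and>
            (\<forall>s t. 0 \<le> s \<longrightarrow> s < t \<longrightarrow> \<beta> r t < \<beta> r s) \<and>
            (\<beta> r \<longlongrightarrow> 0) at_top)"

definition PC :: "(real \<Rightarrow> 'u::real_normed_vector) set" where
  "PC = {u. bounded (u ` {0..}) \<and>
            (\<forall>t\<ge>0. continuous (at_right t) u) \<and>
            (\<forall>t>0. \<exists>l. (u \<longlongrightarrow> l) (at_left t)) \<and>
            (\<forall>t. \<not> t islimpt {s\<in>{0..}. \<not> continuous (at s within {0..}) u})}"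

definition input_norm :: "(real \<Rightarrow> 'u::real_normed_vector) \<Rightarrow> real" where
  "input_norm u = (SUP s\<in>{0..}. norm (u s))"

text \<open>phi t t0 x0 u is the state at time t; it is meaningful for t0 \<ge> 0 and
  t0 \<le> t < tm t0 x0 u (maximal existence time, an extended real).\<close>

definition dom_phi :: "(real \<Rightarrow> 'x \<Rightarrow> (real \<Rightarrow> 'u) \<Rightarrow> ereal) \<Rightarrow> real \<Rightarrow> 'x \<Rightarrow> (real \<Rightarrow> 'u) \<Rightarrow> real set" where
  "dom_phi tm t0 x0 u = {t. t0 \<le> t \<and> ereal t < tm t0 x0 u}"

definition control_system ::
  "(real \<Rightarrow> real \<Rightarrow> 'x::real_normed_vector \<Rightarrow> (real \<Rightarrow> 'u::real_normed_vector) \<Rightarrow> 'x)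
   \<Rightarrow> (real \<Rightarrow> 'x \<Rightarrow> (real \<Rightarrow> 'u) \<Rightarrow> ereal) \<Rightarrow> bool" where
  "control_system phi tm \<longleftrightarrow>
     (\<forall>t0\<ge>0. \<forall>x0. \<forall>u\<in>PC. ereal t0 < tm t0 x0 u) \<and>
     (\<forall>t0\<ge>0. \<forall>x0. \<forall>u\<in>PC. phi t0 t0 x0 u = x0) \<and>
     (\<forall>t0\<ge>0. \<forall>x0. \<forall>u\<in>PC. \<forall>v\<in>PC. \<forall>t \<in> dom_phi tm t0 x0 u.
        (\<forall>s. t0 \<le> s \<and> s < t \<longrightarrow> u s = v s) \<longrightarrow>
        t \<in> dom_phi tm t0 x0 v \<and> phi t t0 x0 v = phi t t0 x0 u) \<and>
     (\<forall>t0\<ge>0. \<forall>x0. \<forall>u\<in>PC. continuous_on (dom_phi tm t0 x0 u) (\<lambda>t. phi t t0 x0 u)) \<and>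
     (\<forall>t0\<ge>0. \<forall>x0. \<forall>u\<in>PC. \<forall>\<tau> t. t0 \<le> \<tau> \<longrightarrow> \<tau> \<le> t \<longrightarrow> ereal t < tm t0 x0 u \<longrightarrow>
        t \<in> dom_phi tm \<tau> (phi \<tau> t0 x0 u) u \<and>
        phi t \<tau> (phi \<tau> t0 x0 u) u = phi t t0 x0 u)"

definition forward_complete :: "(real \<Rightarrow> 'x \<Rightarrow> (real \<Rightarrow> 'u::real_normed_vector) \<Rightarrow> ereal) \<Rightarrow> bool" where
  "forward_complete tm \<longleftrightarrow> (\<forall>t0\<ge>0. \<forall>x0. \<forall>u\<in>PC. tm t0 x0 u = \<infinity>)"

definition BIC ::
  "(real \<Rightarrow> real \<Rightarrow> 'x::real_normed_vector \<Rightarrow> (real \<Rightarrow> 'u::real_normed_vector) \<Rightarrow> 'x)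
   \<Rightarrow> (real \<Rightarrow> 'x \<Rightarrow> (real \<Rightarrow> 'u) \<Rightarrow> ereal) \<Rightarrow> bool" where
  "BIC phi tm \<longleftrightarrow> (\<forall>t0\<ge>0. \<forall>x0. \<forall>u\<in>PC. tm t0 x0 u < \<infinity> \<longrightarrow>
      \<not> bounded ((\<lambda>t. phi t t0 x0 u) ` dom_phi tm t0 x0 u))"

definition lie_deriv ::
  "(real \<Rightarrow> real \<Rightarrow> 'x::real_normed_vector \<Rightarrow> (real \<Rightarrow> 'u) \<Rightarrow> 'x)
   \<Rightarrow> (real \<Rightarrow> 'x \<Rightarrow> real) \<Rightarrow> (real \<Rightarrow> 'u) \<Rightarrow> real \<Rightarrow> 'x \<Rightarrow> ereal" where
  "lie_deriv phi V u t x =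
     Limsup (at_right 0) (\<lambda>h. ereal ((V (t + h) (phi (t + h) t x u) - V t x) / h))"

definition coercive_iISS_LF_with ::
  "(real \<Rightarrow> real \<Rightarrow> 'x::real_normed_vector \<Rightarrow> (real \<Rightarrow> 'u::real_normed_vector) \<Rightarrow> 'x)
   \<Rightarrow> (real \<Rightarrow> 'x \<Rightarrow> real) \<Rightarrow> (real \<Rightarrow> real) \<Rightarrow> (real \<Rightarrow> real) \<Rightarrow> bool" where
  "coercive_iISS_LF_with phi V eta chi \<longleftrightarrow>
     continuous_on ({0..} \<times> UNIV) (\<lambda>(t,x). V t x) \<and>
     (\<forall>t\<ge>0. \<forall>x. V t x \<ge> 0) \<and> (\<forall>t\<ge>0. V t 0 = 0) \<and>
     class_P eta \<and> class_K chi \<and>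
     (\<exists>\<alpha>1 \<alpha>2. class_Kinf \<alpha>1 \<and> class_Kinf \<alpha>2 \<and>
        (\<forall>t\<ge>0. \<forall>x. \<alpha>1 (norm x) \<le> V t x \<and> V t x \<le> \<alpha>2 (norm x))) \<and>
     (\<forall>x. \<forall>u\<in>PC. \<forall>t\<ge>0.
        lie_deriv phi V u t x \<le> ereal (- eta (norm x) + chi (norm (u t))))"

definition coercive_iISS_LF where
  "coercive_iISS_LF phi V \<longleftrightarrow> (\<exists>eta chi. coercive_iISS_LF_with phi V eta chi)"

definition coercive_ISS_LF_diss where
  "coercive_ISS_LF_diss phi V \<longleftrightarrow> (\<exists>eta chi. coercive_iISS_LF_with phi V eta chi \<and>
     (filterlim eta at_top at_top \<or>
      Liminf at_top (\<lambda>\<tau>. ereal (eta \<tau>)) \<ge> Lim at_top (\<lambda>\<tau>. ereal (chi \<tau>))))"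

definition iISS ::
  "(real \<Rightarrow> real \<Rightarrow> 'x::real_normed_vector \<Rightarrow> (real \<Rightarrow> 'u::real_normed_vector) \<Rightarrow> 'x) \<Rightarrow> bool" where
  "iISS phi \<longleftrightarrow> (\<exists>\<alpha> \<mu> \<beta>. class_Kinf \<alpha> \<and> class_K \<mu> \<and> class_KL \<beta> \<and>
     (\<forall>x0. \<forall>u\<in>PC. \<forall>t0 t. 0 \<le> t0 \<longrightarrow> t0 \<le> t \<longrightarrow>
        norm (phi t t0 x0 u) \<le> \<beta> (norm x0) (t - t0) + \<alpha> (integral {t0..t} (\<lambda>s. \<mu> (norm (u s))))))"

definition ISS ::
  "(real \<Rightarrow> real \<Rightarrow> 'x::real_normed_vector \<Rightarrow> (real \<Rightarrow> 'u::real_normed_vector) \<Rightarrow> 'x)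
   \<Rightarrow> (real \<Rightarrow> 'x \<Rightarrow> (real \<Rightarrow> 'u) \<Rightarrow> ereal) \<Rightarrow> bool" where
  "ISS phi tm \<longleftrightarrow> (\<exists>\<beta> \<gamma>. class_KL \<beta> \<and> class_K \<gamma> \<and>
     (\<forall>x0. \<forall>u\<in>PC. \<forall>t0\<ge>0. tm t0 x0 u = \<infinity> \<and>
        (\<forall>t\<ge>t0. norm (phi t t0 x0 u) \<le> \<beta> (norm x0) (t - t0) + \<gamma> (input_norm u))))"

end

(*
  Along a trajectory, t |-> V t (phi t t0 x0 u) is continuous and its upper right Dini
  derivative is at most -eta |phi| + chi |u| (by the cocycle property this is the Lie
  derivative). A comparison principle for Dini derivatives integrates this bound. In
  particular V along a trajectory grows at most by the integral of chi |u|, so trajectories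
  stay bounded on bounded intervals and BIC gives forward completeness.

  While V stays in [c, R], the state stays in {c <= alpha2 |x|, alpha1 |x| <= R}, where eta is
  bounded below by a positive rate; hence V decreases at a definite speed until it falls below
  c. Taking the best threshold c gives a decay profile, and sliding averages turn the
  resulting bound into a continuous KL function. For iISS the input contributes at most twice
  its integral. In the dissipative case there is a gain gamma with chi s + zeta rho <= eta rho
  for rho >= gamma s, so V keeps decreasing while it is above alpha2 (gamma |u|); this level
  becomes the ISS gain after applying a majorant of the inverse of alpha1.
*)
theory Submission
  imports Defs
begin

lemma class_P_nonneg: "class_P f \<Longrightarrow> 0 \<le> r \<Longrightarrow> 0 \<le> f r"
  unfolding class_P_def by (metis less_eq_real_def order_refl)

lemma class_K_zero: "class_K f \<Longrightarrow> f 0 = 0"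
  by (simp add: class_K_def class_P_def)

lemma class_K_nonneg: "class_K f \<Longrightarrow> 0 \<le> r \<Longrightarrow> 0 \<le> f r"
  unfolding class_K_def using class_P_nonneg by blast

lemma class_K_pos: "class_K f \<Longrightarrow> 0 < r \<Longrightarrow> 0 < f r"
  by (simp add: class_K_def class_P_def)

lemma class_K_less: "class_K f \<Longrightarrow> 0 \<le> a \<Longrightarrow> a < b \<Longrightarrow> f a < f b"
  unfolding class_K_def strict_mono_on_def by auto

lemma class_K_mono: "class_K f \<Longrightarrow> 0 \<le> a \<Longrightarrow> a \<le> b \<Longrightarrow> f a \<le> f b"
  using class_K_less by (cases "a = b") (auto intro: less_imp_le)

lemma class_K_continuous_on: "class_K f \<Longrightarrow> continuous_on {0..} f"
  by (simp add: class_K_def class_P_def)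

lemma class_Kinf_imp_class_K: "class_Kinf f \<Longrightarrow> class_K f"
  by (simp add: class_Kinf_def)

lemma class_K_comp:
  assumes g: "class_K g" and h: "class_K h"
  shows "class_K (\<lambda>s. h (g s))"
  unfolding class_K_def class_P_def strict_mono_on_def
proof (intro conjI allI impI)
  show "continuous_on {0..} (\<lambda>s. h (g s))"
    by (rule continuous_on_compose2[OF class_K_continuous_on[OF h] class_K_continuous_on[OF g]])
      (auto intro: class_K_nonneg[OF g])
  show "h (g 0) = 0" using g h by (simp add: class_K_zero)
  show "h (g r) > 0" if "r > 0" for r
    using class_K_pos[OF h class_K_pos[OF g that]] .
  show "h (g r) < h (g s)" if "r \<in> {0..} \<and> s \<in> {0..} \<and> r < s" for r s
    using that class_K_less[OF g] class_K_less[OF h] class_K_nonneg[OF g] by auto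
qed

lemma class_Kinf_scale:
  assumes \<psi>: "class_Kinf \<psi>" and k: "0 < k"
  shows "class_Kinf (\<lambda>v. \<psi> (k * v))"
proof -
  have "class_K (\<lambda>v. k * v)"
    using k unfolding class_K_def class_P_def strict_mono_on_def
    by (auto intro!: continuous_intros)
  moreover have "filterlim (\<lambda>v. k * v) at_top at_top"
    by (rule filterlim_tendsto_pos_mult_at_top[OF tendsto_const k filterlim_ident])
  then have "filterlim (\<lambda>v. \<psi> (k * v)) at_top at_top"
    using \<psi> unfolding class_Kinf_def by (auto intro: filterlim_compose)
  ultimately show ?thesis
    using \<psi> class_K_comp unfolding class_Kinf_def by blast
qed

lemma class_K_max_le_add:
  assumes "class_K \<psi>" "0 \<le> a" "0 \<le> b"
  shows "\<psi> (max a b) \<le> \<psi> a + \<psi> b"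
  using assms class_K_nonneg[of \<psi>] by (cases "a \<le> b") (auto simp: max_def)

lemma class_K_tendsto_0: "class_K chi \<Longrightarrow> (chi \<longlongrightarrow> 0) (at_right 0)"
  using continuous_on_Icc_at_rightD[of 0 1 chi] class_K_continuous_on[of chi] class_K_zero[of chi]
  by (simp add: continuous_on_subset)

section \<open>Continuous majorants\<close>

lemma mono_continuous_sandwich:
  fixes g :: "real \<Rightarrow> real"
  assumes g: "mono g"
  obtains h where "continuous_on UNIV h" "mono h" "\<And>x. g x \<le> h x \<and> h x \<le> g (x + 1)"
proof
  define h where "h x = integral {x..x+1} g" for x
  have int: "f integrable_on {a..b}" if "mono f" for f :: "real \<Rightarrow> real" and a b
    using that by (intro integrable_on_mono_on) (simp add: mono_on_def monoD)
  show "g x \<le> h x \<and> h x \<le> g (x + 1)" for x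
  proof
    have "integral {x..x+1} (\<lambda>_. g x) \<le> h x"
      unfolding h_def by (rule integral_le) (auto intro: int g monoD[OF g])
    then show "g x \<le> h x" by simp
    have "h x \<le> integral {x..x+1} (\<lambda>_. g (x + 1))"
      unfolding h_def by (rule integral_le) (auto intro: int g monoD[OF g])
    then show "h x \<le> g (x + 1)" by simp
  qed
  have shift: "h x = integral {0..1} (\<lambda>s. g (s + x))" for x
    using integral_shift_real_ivl[of x x "x + 1" g] by (simp add: h_def)
  show "mono h"
  proof
    fix a b :: real assume "a \<le> b"
    have "mono (\<lambda>s. g (s + c))" for c by (rule monoI) (auto intro: monoD[OF g])
    then show "h a \<le> h b" unfolding shift
      by (intro integral_le) (auto intro: int monoD[OF g] simp: \<open>a \<le> b\<close>)
  qed
  show "continuous_on UNIV h"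
  proof (rule continuous_at_imp_continuous_on, intro ballI)
    fix x0 :: real
    define F where "F x = integral {x0 - 1..x} g" for x
    have F: "continuous_on {x0 - 1..x0 + 2} F"
      unfolding F_def by (rule indefinite_integral_continuous_1[OF int[OF g]])
    have "h x = F (x + 1) - F x" if "x \<in> {x0 - 1..x0 + 1}" for x
      using that Henstock_Kurzweil_Integration.integral_combine[OF _ _ int[OF g], of "x0 - 1" x "x + 1"]
      by (simp add: h_def F_def)
    moreover have "continuous_on {x0 - 1..x0 + 1} (\<lambda>x. F (x + 1) - F x)"
      by (intro continuous_on_diff continuous_on_compose2[OF F] continuous_on_subset[OF F]
          continuous_intros) auto
    ultimately have "continuous_on {x0 - 1..x0 + 1} h"
      by (auto intro: continuous_on_eq)
    then show "isCont h x0"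
      by (rule continuous_on_interior) auto
  qed
qed

lemma antimono_continuous_sandwich:
  fixes f :: "real \<Rightarrow> real"
  assumes f: "\<And>x y. 0 \<le> x \<Longrightarrow> x \<le> y \<Longrightarrow> f y \<le> f x"
  obtains h where "continuous_on UNIV h" "antimono h"
    "\<And>x. f (max (x + 1) 0) \<le> h x \<and> h x \<le> f (max x 0)"
proof -
  have "mono (\<lambda>x. - f (max x 0))"
    by (rule monoI) (auto intro: f)
  then obtain g where "continuous_on UNIV g" "mono g"
    and g: "\<And>x. - f (max x 0) \<le> g x \<and> g x \<le> - f (max (x + 1) 0)"
    using mono_continuous_sandwich by blast
  then show ?thesis
  proof (intro that[of "\<lambda>x. - g x"])
    show "f (max (x + 1) 0) \<le> - g x \<and> - g x \<le> f (max x 0)" for x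
      using g[of x] by linarith
  qed (auto intro: continuous_intros simp: mono_def antimono_def)
qed

lemma vanishing_antimono_continuous_majorant:
  fixes \<Phi> :: "real \<Rightarrow> real"
  assumes nonneg: "\<And>S. 0 \<le> S \<Longrightarrow> 0 \<le> \<Phi> S"
    and antimono: "\<And>S S'. 0 \<le> S \<Longrightarrow> S \<le> S' \<Longrightarrow> \<Phi> S' \<le> \<Phi> S"
    and tendsto: "(\<Phi> \<longlongrightarrow> 0) at_top"
  obtains \<Phi>' where "continuous_on UNIV \<Phi>'" "antimono \<Phi>'" "\<And>S. 0 \<le> \<Phi>' S" "(\<Phi>' \<longlongrightarrow> 0) at_top"
    "\<And>S. 0 \<le> S \<Longrightarrow> \<Phi> S \<le> \<Phi>' S"
proof -
  obtain h where h_cont: "continuous_on UNIV h" and "antimono h"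
    and h: "\<And>x. \<Phi> (max (x + 1) 0) \<le> h x \<and> h x \<le> \<Phi> (max x 0)"
    using antimono_continuous_sandwich[of \<Phi>, OF antimono] by blast
  show ?thesis
  proof (rule that[of "\<lambda>S. h (S - 1)"])
    show "continuous_on UNIV (\<lambda>S. h (S - 1))"
      by (rule continuous_on_compose2[OF h_cont]) (auto intro: continuous_intros)
    show "antimono (\<lambda>S. h (S - 1))"
      using \<open>antimono h\<close> by (simp add: antimono_def)
    show "\<Phi> S \<le> h (S - 1)" if "0 \<le> S" for S
      using h[of "S - 1"] that by simp
    show h_nonneg: "0 \<le> h (S - 1)" for S
      using h[of "S - 1"] nonneg[of "max S 0"] by simp
    have upper: "eventually (\<lambda>S. h (S - 1) \<le> \<Phi> (-1 + S)) at_top"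
      using eventually_ge_at_top[of 1]
    proof eventually_elim
      case (elim S)
      then show ?case
        using h[of "S - 1"] by simp
    qed
    have lower: "eventually (\<lambda>S. 0 \<le> h (S - 1)) at_top"
      by (intro always_eventually allI h_nonneg)
    have "((\<lambda>S. \<Phi> (-1 + S)) \<longlongrightarrow> 0) at_top"
      by (rule filterlim_compose[OF tendsto filterlim_tendsto_add_at_top[OF tendsto_const filterlim_ident]])
    then show "((\<lambda>S. h (S - 1)) \<longlongrightarrow> 0) at_top"
      by (rule tendsto_sandwich[OF lower upper tendsto_const])
  qed
qed

lemma positive_antimono_continuous_minorant:
  fixes \<sigma> :: "real \<Rightarrow> real"
  assumes pos: "\<And>r. 0 \<le> r \<Longrightarrow> 0 < \<sigma> r"
    and antimono: "\<And>r r'. 0 \<le> r \<Longrightarrow> r \<le> r' \<Longrightarrow> \<sigma> r' \<le> \<sigma> r"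
  obtains \<sigma>' where "continuous_on UNIV \<sigma>'" "antimono \<sigma>'" "\<And>r. 0 < \<sigma>' r"
    "\<And>r. 0 \<le> r \<Longrightarrow> \<sigma>' r \<le> \<sigma> r"
proof -
  obtain h where h_cont: "continuous_on UNIV h" and h_anti: "antimono h"
    and h: "\<And>x. \<sigma> (max (x + 1) 0) \<le> h x \<and> h x \<le> \<sigma> (max x 0)"
    using antimono_continuous_sandwich[of \<sigma>, OF antimono] by blast
  show ?thesis
  proof (rule that[OF h_cont h_anti])
    show "h r \<le> \<sigma> r" if "0 \<le> r" for r
      using h[of r] that by simp
    show "0 < h r" for r
      using h[of r] pos[of "max (r + 1) 0"] by simp
  qed
qed

lemma continuous_on_extend_by_zero:
  fixes k :: "real \<Rightarrow> real"
  assumes k: "continuous_on {0<..} k" and k_0: "(k \<longlongrightarrow> 0) (at_right 0)"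
  shows "continuous_on UNIV (\<lambda>s. if 0 < s then k s else 0)"
proof (rule continuous_at_imp_continuous_on, intro ballI)
  fix x :: real
  show "isCont (\<lambda>s. if 0 < s then k s else 0) x"
  proof (cases x "0::real" rule: linorder_cases)
    case less
    have "eventually (\<lambda>s. (if 0 < s then k s else 0) = 0) (nhds x)"
      using eventually_nhds_in_open[of "{..<0}" x] less by (auto elim!: eventually_mono)
    then show ?thesis
      by (simp add: isCont_cong)
  next
    case greater
    have "eventually (\<lambda>s. (if 0 < s then k s else 0) = k s) (nhds x)"
      using eventually_nhds_in_open[of "{0<..}" x] greater by (auto elim!: eventually_mono)
    moreover have "isCont k x"
      using k greater by (simp add: continuous_on_eq_continuous_at)
    ultimately show ?thesis
      by (simp add: isCont_cong)
  next
    case equal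
    have "((\<lambda>s. if 0 < s then k s else 0) \<longlongrightarrow> 0) (at_left 0)"
      by (rule tendsto_eventually) (auto simp: eventually_at_left_field intro: exI[of _ "-1"])
    moreover have "((\<lambda>s. if 0 < s then k s else 0) \<longlongrightarrow> 0) (at_right 0)"
      using k_0 by (rule Lim_transform_eventually) (rule eventually_mono[OF eventually_at_right_less], simp)
    ultimately show ?thesis
      using equal by (simp add: isCont_def filterlim_split_at)
  qed
qed

text \<open>The sliding average is taken on a logarithmic scale, so that its window
  \<open>[s, e * s]\<close> shrinks towards 0 and the majorant still vanishes there.\<close>

lemma mono_continuous_majorant_vanishing:
  fixes f :: "real \<Rightarrow> real"
  assumes f: "mono_on {0<..} f"
    and small: "\<And>\<epsilon>. 0 < \<epsilon> \<Longrightarrow> eventually (\<lambda>s. f s \<le> \<epsilon>) (at_right 0)"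
  obtains k where "continuous_on UNIV k" "mono k" "k 0 = 0" "\<And>s. 0 \<le> k s" "\<And>s. 0 < s \<Longrightarrow> f s \<le> k s"
proof -
  have "mono (\<lambda>\<tau>. f (exp \<tau>))"
    using f by (intro monoI) (auto simp: mono_on_def)
  then obtain h where h_cont: "continuous_on UNIV h" and "mono h"
    and h: "\<And>\<tau>. f (exp \<tau>) \<le> h \<tau> \<and> h \<tau> \<le> f (exp (\<tau> + 1))"
    using mono_continuous_sandwich by blast
  define k where "k s = max 0 (h (ln s))" for s
  have "continuous_on {0<..} k"
    unfolding k_def by (intro continuous_intros continuous_on_compose2[OF h_cont]) auto
  moreover have "(k \<longlongrightarrow> 0) (at_right 0)"
  proof (rule order_tendstoI)
    fix a :: real
    assume "0 < a"
    then obtain b where "0 < b" and b: "\<And>s. 0 < s \<Longrightarrow> s < b \<Longrightarrow> f s \<le> a / 2"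
      using small[of "a / 2"] by (auto simp: eventually_at_right_field)
    have "k s < a" if "0 < s" "s < b / exp 1" for s
      using h[of "ln s"] b[of "exp 1 * s"] that \<open>0 < a\<close> by (simp add: k_def exp_add field_simps)
    then show "eventually (\<lambda>s. k s < a) (at_right 0)"
      unfolding eventually_at_right_field using \<open>0 < b\<close> by (intro exI[of _ "b / exp 1"]) auto
  qed (simp add: k_def less_max_iff_disj)
  ultimately have "continuous_on UNIV (\<lambda>s. if 0 < s then k s else 0)"
    by (rule continuous_on_extend_by_zero)
  then show ?thesis
  proof (rule that)
    show "mono (\<lambda>s. if 0 < s then k s else 0)"
    proof (rule monoI)
      fix x y :: real
      assume "x \<le> y"
      then show "(if 0 < x then k x else 0) \<le> (if 0 < y then k y else 0)"
        using monoD[OF \<open>mono h\<close>, of "ln x" "ln y"] by (auto simp: k_def intro: max.mono)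
    qed
    show "f s \<le> (if 0 < s then k s else 0)" if "0 < s" for s
      using h[of "ln s"] that by (simp add: k_def le_max_iff_disj)
  qed (simp_all add: k_def)
qed

lemma Kinf_strict_majorant:
  fixes f :: "real \<Rightarrow> real"
  assumes "mono_on {0<..} f" "\<And>\<epsilon>. 0 < \<epsilon> \<Longrightarrow> eventually (\<lambda>s. f s \<le> \<epsilon>) (at_right 0)"
  obtains \<gamma> where "class_Kinf \<gamma>" "\<And>s. 0 < s \<Longrightarrow> f s < \<gamma> s"
proof -
  obtain k where k: "continuous_on UNIV k" "mono k" "k 0 = 0" "\<And>s. 0 \<le> k s"
    and f_le: "\<And>s. 0 < s \<Longrightarrow> f s \<le> k s"
    using mono_continuous_majorant_vanishing[OF assms] by blast
  show ?thesis
  proof (rule that[of "\<lambda>s. k s + s"])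
    show "class_Kinf (\<lambda>s. k s + s)"
      unfolding class_Kinf_def class_K_def class_P_def strict_mono_on_def
    proof (intro conjI allI impI)
      show "continuous_on {0..} (\<lambda>s. k s + s)"
        using k(1) by (intro continuous_intros) (auto elim: continuous_on_subset)
      show "filterlim (\<lambda>s. k s + s) at_top at_top"
        by (rule filterlim_at_top_mono[OF filterlim_ident]) (simp add: k(4))
      show "k r + r < k s + s" if "r \<in> {0..} \<and> s \<in> {0..} \<and> r < s" for r s
        using that monoD[OF k(2), of r s] by simp
      show "0 < k r + r" if "0 < r" for r
        using k(4)[of r] that by linarith
    qed (simp add: k(3))
    show "f s < k s + s" if "0 < s" for s
      using f_le[OF that] that by simp
  qed
qed

lemma threshold_Kinf_majorant:
  assumes up: "\<And>s \<rho> \<rho>'. P s \<rho> \<Longrightarrow> \<rho> \<le> \<rho>' \<Longrightarrow> P s \<rho>'"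
    and anti: "\<And>s s' \<rho>. 0 < s \<Longrightarrow> s \<le> s' \<Longrightarrow> P s' \<rho> \<Longrightarrow> P s \<rho>"
    and ex: "\<And>s. 0 < s \<Longrightarrow> \<exists>\<rho>. P s \<rho>"
    and small: "\<And>\<epsilon>. 0 < \<epsilon> \<Longrightarrow> eventually (\<lambda>s. P s \<epsilon>) (at_right 0)"
  obtains \<gamma> where "class_Kinf \<gamma>" "\<And>s. 0 < s \<Longrightarrow> P s (\<gamma> s)"
proof -
  define R where "R s = {\<rho>. 0 \<le> \<rho> \<and> P s \<rho>}" for s
  have R_ne: "R s \<noteq> {}" if s: "0 < s" for s
  proof -
    obtain \<rho> where "P s \<rho>"
      using ex[OF s] by blast
    then have "max \<rho> 0 \<in> R s"
      using up by (simp add: R_def)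
    then show ?thesis by blast
  qed
  have R_bdd: "bdd_below (R s)" for s
    by (rule bdd_belowI[of _ 0]) (simp add: R_def)
  have mono: "mono_on {0<..} (\<lambda>s. Inf (R s))"
  proof (rule mono_onI)
    fix s s' :: real
    assume "s \<in> {0<..}" "s' \<in> {0<..}" "s \<le> s'"
    then show "Inf (R s) \<le> Inf (R s')"
      using anti by (intro cInf_superset_mono R_ne R_bdd) (auto simp: R_def)
  qed
  have small_Inf: "eventually (\<lambda>s. Inf (R s) \<le> \<epsilon>) (at_right 0)" if "0 < \<epsilon>" for \<epsilon>
    using small[OF that] eventually_at_right_less[of 0]
  proof eventually_elim
    case (elim s)
    then show ?case
      using that by (intro cInf_lower R_bdd) (simp add: R_def)
  qed
  obtain \<gamma> where \<gamma>: "class_Kinf \<gamma>" and Inf_less: "\<And>s. 0 < s \<Longrightarrow> Inf (R s) < \<gamma> s"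
    by (rule Kinf_strict_majorant[OF mono small_Inf]) blast+
  have "P s (\<gamma> s)" if "0 < s" for s
    using cInf_lessD[OF R_ne[OF that] Inf_less[OF that]] up by (force simp: R_def)
  then show ?thesis
    by (rule that[OF \<gamma>])
qed

lemma Kinf_inverse_majorant:
  assumes \<alpha>: "class_Kinf \<alpha>"
  obtains \<psi> where "class_Kinf \<psi>" "\<And>\<rho> v. 0 \<le> \<rho> \<Longrightarrow> \<alpha> \<rho> \<le> v \<Longrightarrow> \<rho> \<le> \<psi> v"
proof -
  have \<alpha>K: "class_K \<alpha>"
    using \<alpha> by (rule class_Kinf_imp_class_K)
  have le_of_\<alpha>_le: "\<rho> \<le> \<rho>'" if "0 \<le> \<rho>'" "\<alpha> \<rho> \<le> \<alpha> \<rho>'" for \<rho> \<rho>'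
    using class_K_less[OF \<alpha>K that(1), of \<rho>] that(2) by (cases "\<rho> \<le> \<rho>'") auto
  define P where "P v \<rho>' \<longleftrightarrow> (\<forall>\<rho>\<ge>0. \<alpha> \<rho> \<le> v \<longrightarrow> \<rho> \<le> \<rho>')" for v \<rho>'
  obtain \<psi> where \<psi>: "class_Kinf \<psi>" and P_\<psi>: "\<And>v. 0 < v \<Longrightarrow> P v (\<psi> v)"
  proof (rule threshold_Kinf_majorant[of P])
    show "P v \<rho>'" if "P v \<rho>" "\<rho> \<le> \<rho>'" for v \<rho> \<rho>'
      using that by (auto simp: P_def)
    show "P v \<rho>" if "0 < v" "v \<le> v'" "P v' \<rho>" for v v' \<rho>
      using that by (auto simp: P_def)
    show "\<exists>\<rho>'. P v \<rho>'" for v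
    proof -
      obtain b where b: "\<And>x. b \<le> x \<Longrightarrow> v < \<alpha> x"
        using \<alpha> unfolding class_Kinf_def filterlim_at_top_dense eventually_at_top_linorder by blast
      have "\<rho> \<le> max b 0" if "\<alpha> \<rho> \<le> v" for \<rho>
        using b[of \<rho>] that by (cases "b \<le> \<rho>") auto
      then have "P v (max b 0)"
        by (simp add: P_def)
      then show ?thesis ..
    qed
    show "eventually (\<lambda>v. P v \<epsilon>) (at_right 0)" if "0 < \<epsilon>" for \<epsilon>
    proof -
      have "eventually (\<lambda>v. v < \<alpha> \<epsilon>) (at_right 0)"
        using class_K_pos[OF \<alpha>K that] unfolding eventually_at_right_field by blast
      then show ?thesis
      proof eventually_elim
        case (elim v)
        then show ?case
          using that le_of_\<alpha>_le[of \<epsilon>] by (auto simp: P_def)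
      qed
    qed
  qed blast
  show ?thesis
  proof (rule that[OF \<psi>])
    fix \<rho> v :: real
    assume \<rho>: "0 \<le> \<rho>" "\<alpha> \<rho> \<le> v"
    show "\<rho> \<le> \<psi> v"
    proof (cases "0 < v")
      case True
      then show ?thesis
        using P_\<psi>[OF True] \<rho> by (simp add: P_def)
    next
      case False
      then have "\<rho> = 0" "v = 0"
        using \<rho> class_K_pos[OF \<alpha>K, of \<rho>] class_K_nonneg[OF \<alpha>K, of \<rho>] by linarith+
      then show ?thesis
        using class_K_zero[OF class_Kinf_imp_class_K[OF \<psi>]] by simp
    qed
  qed
qed

section \<open>Gain margin of a dissipative Lyapunov function\<close>

lemma class_K_less_Lim:
  assumes chi: "class_K chi" and s: "0 \<le> s"
  shows "ereal (chi s) < Lim at_top (\<lambda>\<tau>. ereal (chi \<tau>))"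
proof -
  define M where "M = (SUP \<tau>\<in>{0..}. ereal (chi \<tau>))"
  have le_M: "ereal (chi \<tau>) \<le> M" if "0 \<le> \<tau>" for \<tau>
    unfolding M_def using that by (intro SUP_upper) auto
  have "((\<lambda>\<tau>. ereal (chi \<tau>)) \<longlongrightarrow> M) at_top"
  proof (rule order_tendstoI)
    fix a
    assume "a < M"
    then obtain \<tau>0 where "0 \<le> \<tau>0" "a < ereal (chi \<tau>0)"
      unfolding M_def less_SUP_iff by auto
    then have "a < ereal (chi \<tau>)" if "\<tau>0 \<le> \<tau>" for \<tau>
      using class_K_mono[OF chi \<open>0 \<le> \<tau>0\<close> that] by (simp add: order_less_le_trans)
    then show "eventually (\<lambda>\<tau>. a < ereal (chi \<tau>)) at_top"
      unfolding eventually_at_top_linorder by blast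
  next
    fix a
    assume "M < a"
    then show "eventually (\<lambda>\<tau>. ereal (chi \<tau>) < a) at_top"
      unfolding eventually_at_top_linorder using le_M by (meson le_less_trans)
  qed
  then have Lim: "Lim at_top (\<lambda>\<tau>. ereal (chi \<tau>)) = M"
    by (intro tendsto_Lim) auto
  have "ereal (chi s) < ereal (chi (s + 1))"
    using class_K_less[OF chi s] by simp
  also have "\<dots> \<le> M"
    using le_M s by simp
  finally show ?thesis
    unfolding Lim .
qed

lemma class_P_uniformly_positive:
  assumes eta: "class_P eta" and "0 < \<epsilon>" "0 < c" and "eventually (\<lambda>\<rho>. c \<le> eta \<rho>) at_top"
  obtains e where "0 < e" "\<And>\<rho>. \<epsilon> \<le> \<rho> \<Longrightarrow> e \<le> eta \<rho>"
proof -
  obtain N where N: "\<And>\<rho>. N \<le> \<rho> \<Longrightarrow> c \<le> eta \<rho>"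
    using assms(4) by (auto simp: eventually_at_top_linorder)
  have "continuous_on {\<epsilon>..max N \<epsilon>} eta"
    using eta \<open>0 < \<epsilon>\<close> by (auto simp: class_P_def elim: continuous_on_subset)
  then obtain x where x: "x \<in> {\<epsilon>..max N \<epsilon>}" "\<And>y. y \<in> {\<epsilon>..max N \<epsilon>} \<Longrightarrow> eta x \<le> eta y"
    using continuous_attains_inf[of "{\<epsilon>..max N \<epsilon>}" eta] by auto
  show ?thesis
  proof (rule that[of "min (eta x) c"])
    show "0 < min (eta x) c"
      using x(1) eta \<open>0 < \<epsilon>\<close> \<open>0 < c\<close> by (simp add: class_P_def)
    show "min (eta x) c \<le> eta \<rho>" if "\<epsilon> \<le> \<rho>" for \<rho>
    proof (cases "\<rho> \<le> max N \<epsilon>")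
      case True
      then show ?thesis
        using x(2)[of \<rho>] that by (simp add: min.coboundedI1)
    next
      case False
      then show ?thesis
        using N[of \<rho>] by (simp add: min.coboundedI2)
    qed
  qed
qed

lemma eventually_twice_class_K_le:
  assumes eta: "class_P eta" and chi: "class_K chi"
    and "0 < c" "eventually (\<lambda>\<rho>. c \<le> eta \<rho>) at_top" and "0 < \<epsilon>"
  shows "eventually (\<lambda>s. \<forall>\<rho>\<ge>\<epsilon>. 2 * chi s \<le> eta \<rho>) (at_right 0)"
proof -
  obtain e where "0 < e" and e: "\<And>\<rho>. \<epsilon> \<le> \<rho> \<Longrightarrow> e \<le> eta \<rho>"
    using class_P_uniformly_positive[OF eta \<open>0 < \<epsilon>\<close> \<open>0 < c\<close> assms(4)] by blast
  have "eventually (\<lambda>s. chi s < e / 2) (at_right 0)"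
    using class_K_tendsto_0[OF chi] \<open>0 < e\<close> by (intro order_tendstoD) auto
  then show ?thesis
    by (rule eventually_mono) (use e in force)
qed

lemma dissipative_eventual_margin:
  assumes chi: "class_K chi"
    and dissipative: "filterlim eta at_top at_top \<or>
      Liminf at_top (\<lambda>\<tau>. ereal (eta \<tau>)) \<ge> Lim at_top (\<lambda>\<tau>. ereal (chi \<tau>))"
    and \<zeta>: "\<And>\<rho>. \<zeta> \<rho> \<le> 1 / (1 + \<rho>)" and "0 \<le> s"
  shows "eventually (\<lambda>\<rho>. chi s + \<zeta> \<rho> \<le> eta \<rho>) at_top"
  using dissipative
proof
  assume "filterlim eta at_top at_top"
  then have "eventually (\<lambda>\<rho>. chi s + 1 \<le> eta \<rho>) at_top"
    by (simp add: filterlim_at_top)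
  then show ?thesis
    using eventually_ge_at_top[of 0]
  proof eventually_elim
    case (elim \<rho>)
    then show ?case
      using \<zeta>[of \<rho>] by (smt (verit) divide_le_eq_1)
  qed
next
  assume "Lim at_top (\<lambda>\<tau>. ereal (chi \<tau>)) \<le> Liminf at_top (\<lambda>\<tau>. ereal (eta \<tau>))"
  with class_K_less_Lim[OF chi \<open>0 \<le> s\<close>]
  have "ereal (chi s) < Liminf at_top (\<lambda>\<tau>. ereal (eta \<tau>))"
    by (rule order.strict_trans2)
  then obtain c where c: "chi s < c" "ereal c < Liminf at_top (\<lambda>\<tau>. ereal (eta \<tau>))"
    using ereal_dense2 by force
  have "filterlim (\<lambda>\<rho>::real. 1 + \<rho>) at_top at_top"
    by (rule filterlim_tendsto_add_at_top[OF tendsto_const filterlim_ident])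
  from tendsto_inverse_0_at_top[OF this]
  have "((\<lambda>\<rho>::real. 1 / (1 + \<rho>)) \<longlongrightarrow> 0) at_top"
    by (simp add: inverse_eq_divide)
  then have "eventually (\<lambda>\<rho>. 1 / (1 + \<rho>) < c - chi s) at_top"
    using c(1) by (intro order_tendstoD) auto
  moreover have "eventually (\<lambda>\<rho>. c < eta \<rho>) at_top"
    using less_LiminfD[OF c(2)] by simp
  ultimately show ?thesis
  proof eventually_elim
    case (elim \<rho>)
    then show ?case
      using \<zeta>[of \<rho>] by linarith
  qed
qed

lemma dissipative_gain_margin:
  assumes eta: "class_P eta" and chi: "class_K chi"
    and dissipative: "filterlim eta at_top at_top \<or>
      Liminf at_top (\<lambda>\<tau>. ereal (eta \<tau>)) \<ge> Lim at_top (\<lambda>\<tau>. ereal (chi \<tau>))"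
  obtains \<zeta> \<gamma> where "class_P \<zeta>" "class_K \<gamma>" "\<And>s \<rho>. 0 \<le> s \<Longrightarrow> \<gamma> s \<le> \<rho> \<Longrightarrow> chi s + \<zeta> \<rho> \<le> eta \<rho>"
proof -
  \<comment> \<open>\<open>eta / 2\<close> leaves room for small inputs, \<open>1 / (1 + \<rho>)\<close> lets the margin survive when
    \<open>eta\<close> is only asymptotically above \<open>chi\<close>.\<close>
  define \<zeta> where "\<zeta> \<rho> = min (eta \<rho> / 2) (1 / (1 + \<rho>))" for \<rho>
  have \<zeta>: "class_P \<zeta>"
    using eta unfolding class_P_def \<zeta>_def by (auto intro!: continuous_intros)
  have \<zeta>_le: "\<zeta> \<rho> \<le> eta \<rho> / 2" "\<zeta> \<rho> \<le> 1 / (1 + \<rho>)" for \<rho>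
    by (simp_all add: \<zeta>_def)
  note eventual_margin = dissipative_eventual_margin[OF chi dissipative \<zeta>_le(2)]
  have "eventually (\<lambda>\<rho>. chi 1 \<le> eta \<rho>) at_top"
    using eventual_margin[OF zero_le_one] eventually_ge_at_top[of 0]
    by eventually_elim (use class_P_nonneg[OF \<zeta>] in force)
  note near_zero = eventually_twice_class_K_le[OF eta chi class_K_pos[OF chi zero_less_one] this]
  obtain \<gamma> where \<gamma>: "class_Kinf \<gamma>" and margin: "\<And>s. 0 < s \<Longrightarrow> \<forall>\<rho>\<ge>\<gamma> s. chi s + \<zeta> \<rho> \<le> eta \<rho>"
  proof (rule threshold_Kinf_majorant[of "\<lambda>s \<rho>0. \<forall>\<rho>\<ge>\<rho>0. chi s + \<zeta> \<rho> \<le> eta \<rho>"])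
    show "\<forall>\<rho>\<ge>\<rho>'. chi s + \<zeta> \<rho> \<le> eta \<rho>" if "\<forall>\<rho>\<ge>\<rho>0. chi s + \<zeta> \<rho> \<le> eta \<rho>" "\<rho>0 \<le> \<rho>'" for s \<rho>0 \<rho>'
      using that by auto
    show "\<forall>\<rho>\<ge>\<rho>0. chi s + \<zeta> \<rho> \<le> eta \<rho>" if "0 < s" "s \<le> s'" "\<forall>\<rho>\<ge>\<rho>0. chi s' + \<zeta> \<rho> \<le> eta \<rho>" for s s' \<rho>0
      using that class_K_mono[OF chi, of s s'] by (smt (verit))
    show "\<exists>\<rho>0. \<forall>\<rho>\<ge>\<rho>0. chi s + \<zeta> \<rho> \<le> eta \<rho>" if "0 < s" for s
      using eventual_margin[of s] that by (simp add: eventually_at_top_linorder)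
    show "eventually (\<lambda>s. \<forall>\<rho>\<ge>\<epsilon>. chi s + \<zeta> \<rho> \<le> eta \<rho>) (at_right 0)" if "0 < \<epsilon>" for \<epsilon>
      using near_zero[OF that]
    proof (rule eventually_mono)
      fix s
      assume twice: "\<forall>\<rho>\<ge>\<epsilon>. 2 * chi s \<le> eta \<rho>"
      show "\<forall>\<rho>\<ge>\<epsilon>. chi s + \<zeta> \<rho> \<le> eta \<rho>"
      proof (intro allI impI)
        fix \<rho>
        assume "\<epsilon> \<le> \<rho>"
        then show "chi s + \<zeta> \<rho> \<le> eta \<rho>"
          using twice \<zeta>_le(1)[of \<rho>] by force
      qed
    qed
  qed blast
  show ?thesis
  proof (rule that[OF \<zeta> class_Kinf_imp_class_K[OF \<gamma>]])
    fix s \<rho> :: real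
    assume "0 \<le> s" "\<gamma> s \<le> \<rho>"
    then show "chi s + \<zeta> \<rho> \<le> eta \<rho>"
      using margin[of s] \<zeta>_le(1)[of \<rho>] class_P_nonneg[OF eta, of \<rho>] class_K_zero[OF chi]
        class_K_zero[OF class_Kinf_imp_class_K[OF \<gamma>]]
      by (cases "s = 0") auto
  qed
qed

section \<open>Decay profiles and KL bounds\<close>

text \<open>The cap at 1 makes the product of two such bounds a lower bound for \<open>z\<close> on either
  set, see \<open>rate_product_le\<close>.\<close>

definition inf_capped :: "(real \<Rightarrow> real) \<Rightarrow> real set \<Rightarrow> real" where
  "inf_capped z S = (if S = {} then 1 else min 1 (INF \<rho>\<in>S. z \<rho>))"

lemma inf_capped_le_1: "inf_capped z S \<le> 1"
  by (simp add: inf_capped_def)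

lemma class_P_nonneg_on:
  assumes "class_P z" "S \<subseteq> {0..}" "\<rho> \<in> S"
  shows "0 \<le> z \<rho>"
  using assms class_P_nonneg by auto

lemma inf_capped_nonneg:
  assumes "class_P z" "S \<subseteq> {0..}"
  shows "0 \<le> inf_capped z S"
proof (cases "S = {}")
  case False
  then have "0 \<le> (INF \<rho>\<in>S. z \<rho>)"
    using class_P_nonneg_on[OF assms] by (rule cINF_greatest)
  then show ?thesis
    by (simp add: inf_capped_def)
qed (simp add: inf_capped_def)

lemma inf_capped_le:
  assumes "class_P z" "S \<subseteq> {0..}" "\<rho> \<in> S"
  shows "inf_capped z S \<le> z \<rho>"
proof -
  have "bdd_below (z ` S)"
    using class_P_nonneg_on[OF assms(1,2)] by (intro bdd_belowI2[of _ 0])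
  then have "(INF \<rho>\<in>S. z \<rho>) \<le> z \<rho>"
    using assms(3) by (rule cINF_lower)
  then show ?thesis
    using assms(3) by (auto simp: inf_capped_def)
qed

lemma inf_capped_pos:
  assumes z: "class_P z" and "0 < a" and S: "S \<subseteq> {a..b}"
  shows "0 < inf_capped z S"
proof (cases "S = {}")
  case False
  then have "a \<le> b"
    using S by auto
  have "continuous_on {a..b} z"
    using z \<open>0 < a\<close> unfolding class_P_def by (auto elim: continuous_on_subset)
  then obtain x where x: "x \<in> {a..b}" "\<And>y. y \<in> {a..b} \<Longrightarrow> z x \<le> z y"
    using continuous_attains_inf[of "{a..b}" z] \<open>a \<le> b\<close> by auto
  have "0 < z x"
    using x(1) \<open>0 < a\<close> z by (simp add: class_P_def)
  also have "z x \<le> (INF \<rho>\<in>S. z \<rho>)"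
    using False S x(2) by (intro cINF_greatest) auto
  finally show ?thesis
    using False by (simp add: inf_capped_def)
qed (simp add: inf_capped_def)

lemma inf_capped_antimono:
  assumes "class_P z" "S \<subseteq> S'" "S' \<subseteq> {0..}"
  shows "inf_capped z S' \<le> inf_capped z S"
proof (cases "S = {}")
  case False
  have "bdd_below (z ` S')"
    using class_P_nonneg_on[OF assms(1,3)] by (intro bdd_belowI2[of _ 0])
  then have "(INF \<rho>\<in>S'. z \<rho>) \<le> (INF \<rho>\<in>S. z \<rho>)"
    using False assms(2) by (intro cINF_superset_mono) auto
  then show ?thesis
    using False assms(2) by (auto simp: inf_capped_def)
qed (simp add: inf_capped_def)

definition rate_small :: "(real \<Rightarrow> real) \<Rightarrow> (real \<Rightarrow> real) \<Rightarrow> real \<Rightarrow> real" where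
  "rate_small z \<alpha> c = inf_capped z {\<rho>. 0 \<le> \<rho> \<and> \<rho> \<le> 1 \<and> c \<le> \<alpha> \<rho>}"

definition rate_large :: "(real \<Rightarrow> real) \<Rightarrow> (real \<Rightarrow> real) \<Rightarrow> real \<Rightarrow> real" where
  "rate_large z \<alpha> R = inf_capped z {\<rho>. 1 \<le> \<rho> \<and> \<alpha> \<rho> \<le> R}"

lemma rate_small_nonneg: "class_P z \<Longrightarrow> 0 \<le> rate_small z \<alpha> c"
  unfolding rate_small_def by (rule inf_capped_nonneg) auto

lemma rate_large_nonneg: "class_P z \<Longrightarrow> 0 \<le> rate_large z \<alpha> R"
  unfolding rate_large_def by (rule inf_capped_nonneg) auto

lemma rate_product_le:
  assumes z: "class_P z" and "0 \<le> \<rho>" "c \<le> \<alpha>2 \<rho>" "\<alpha>1 \<rho> \<le> R"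
  shows "rate_small z \<alpha>2 c * rate_large z \<alpha>1 R \<le> z \<rho>"
proof (cases "\<rho> \<le> 1")
  case True
  have "rate_small z \<alpha>2 c * rate_large z \<alpha>1 R \<le> rate_small z \<alpha>2 c"
    unfolding rate_large_def by (rule mult_left_le[OF inf_capped_le_1 rate_small_nonneg[OF z]])
  also have "\<dots> \<le> z \<rho>"
    unfolding rate_small_def using assms True by (intro inf_capped_le[OF z]) auto
  finally show ?thesis .
next
  case False
  have "rate_small z \<alpha>2 c \<le> 1"
    by (simp add: rate_small_def inf_capped_le_1)
  then have "rate_small z \<alpha>2 c * rate_large z \<alpha>1 R \<le> rate_large z \<alpha>1 R"
    by (rule mult_left_le_one_le[OF rate_large_nonneg[OF z] rate_small_nonneg[OF z]])
  also have "\<dots> \<le> z \<rho>"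
    unfolding rate_large_def using assms False by (intro inf_capped_le[OF z]) auto
  finally show ?thesis .
qed

lemma rate_small_pos:
  assumes z: "class_P z" and \<alpha>: "class_K \<alpha>" and "0 < c"
  shows "0 < rate_small z \<alpha> c"
proof -
  have "eventually (\<lambda>\<rho>. \<alpha> \<rho> < c) (at_right 0)"
    using class_K_tendsto_0[OF \<alpha>] \<open>0 < c\<close> by (rule order_tendstoD)
  then obtain d where "0 < d" and d: "\<And>\<rho>. 0 < \<rho> \<Longrightarrow> \<rho> < d \<Longrightarrow> \<alpha> \<rho> < c"
    unfolding eventually_at_right_field by auto
  have "{\<rho>. 0 \<le> \<rho> \<and> \<rho> \<le> 1 \<and> c \<le> \<alpha> \<rho>} \<subseteq> {d..1}"
  proof
    fix \<rho>
    assume \<rho>: "\<rho> \<in> {\<rho>. 0 \<le> \<rho> \<and> \<rho> \<le> 1 \<and> c \<le> \<alpha> \<rho>}"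
    then have "\<rho> \<noteq> 0"
      using \<open>0 < c\<close> class_K_zero[OF \<alpha>] by auto
    then show "\<rho> \<in> {d..1}"
      using \<rho> d[of \<rho>] by force
  qed
  then show ?thesis
    unfolding rate_small_def by (rule inf_capped_pos[OF z \<open>0 < d\<close>])
qed

lemma rate_large_pos:
  assumes z: "class_P z" and \<alpha>: "class_Kinf \<alpha>"
  shows "0 < rate_large z \<alpha> R"
proof -
  obtain b where b: "\<And>\<rho>. b \<le> \<rho> \<Longrightarrow> R < \<alpha> \<rho>"
    using \<alpha> unfolding class_Kinf_def filterlim_at_top_dense eventually_at_top_linorder by blast
  have "\<rho> \<in> {1..b}" if "1 \<le> \<rho>" "\<alpha> \<rho> \<le> R" for \<rho>
    using b[of \<rho>] that by (cases "b \<le> \<rho>") auto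
  then have "{\<rho>. 1 \<le> \<rho> \<and> \<alpha> \<rho> \<le> R} \<subseteq> {1..b}"
    by blast
  then show ?thesis
    unfolding rate_large_def by (rule inf_capped_pos[OF z zero_less_one])
qed

lemma rate_large_antimono: "class_P z \<Longrightarrow> R \<le> R' \<Longrightarrow> rate_large z \<alpha> R' \<le> rate_large z \<alpha> R"
  unfolding rate_large_def by (rule inf_capped_antimono) auto

text \<open>A quantity that starts below 1 and decreases with speed at least \<^term>\<open>rate_small z \<alpha> c\<close>
  as long as it stays above \<^term>\<open>c\<close> lies, after time \<^term>\<open>S\<close>, below
  \<^term>\<open>max c (1 - rate_small z \<alpha> c * S)\<close> for every \<^term>\<open>c\<close>.\<close>

definition decay_profile :: "(real \<Rightarrow> real) \<Rightarrow> (real \<Rightarrow> real) \<Rightarrow> real \<Rightarrow> real" where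
  "decay_profile z \<alpha> S = (INF c\<in>{0<..1}. max c (1 - rate_small z \<alpha> c * S))"

lemma decay_profile_le:
  assumes "0 < c" "c \<le> 1"
  shows "decay_profile z \<alpha> S \<le> max c (1 - rate_small z \<alpha> c * S)"
  unfolding decay_profile_def using assms
  by (intro cINF_lower bdd_belowI2[of _ 0]) auto

lemma decay_profile_greatest:
  assumes "\<And>c. 0 < c \<Longrightarrow> c \<le> 1 \<Longrightarrow> v \<le> max c (1 - rate_small z \<alpha> c * S)"
  shows "v \<le> decay_profile z \<alpha> S"
  unfolding decay_profile_def using assms by (intro cINF_greatest) auto

lemma decay_profile_nonneg: "0 \<le> decay_profile z \<alpha> S"
  by (rule decay_profile_greatest) simp

lemma decay_profile_antimono:
  assumes z: "class_P z" and "0 \<le> S" "S \<le> S'"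
  shows "decay_profile z \<alpha> S' \<le> decay_profile z \<alpha> S"
proof (rule decay_profile_greatest)
  fix c :: real
  assume c: "0 < c" "c \<le> 1"
  have "rate_small z \<alpha> c * S \<le> rate_small z \<alpha> c * S'"
    using assms(3) rate_small_nonneg[OF z] by (rule mult_left_mono)
  then show "decay_profile z \<alpha> S' \<le> max c (1 - rate_small z \<alpha> c * S)"
    using decay_profile_le[OF c, of z \<alpha> S'] by linarith
qed

lemma decay_profile_tendsto:
  assumes z: "class_P z" and \<alpha>: "class_K \<alpha>"
  shows "(decay_profile z \<alpha> \<longlongrightarrow> 0) at_top"
proof (rule order_tendstoI)
  fix a :: real
  assume "a < 0"
  then show "eventually (\<lambda>S. a < decay_profile z \<alpha> S) at_top"
    by (intro always_eventually allI less_le_trans[OF _ decay_profile_nonneg])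
next
  fix \<epsilon> :: real
  assume "0 < \<epsilon>"
  define c where "c = min (\<epsilon> / 2) 1"
  have c: "0 < c" "c \<le> 1" "c < \<epsilon>"
    using \<open>0 < \<epsilon>\<close> by (auto simp: c_def)
  have A: "0 < rate_small z \<alpha> c"
    by (rule rate_small_pos[OF z \<alpha> c(1)])
  have "decay_profile z \<alpha> S < \<epsilon>" if "1 / rate_small z \<alpha> c \<le> S" for S
  proof -
    have "1 \<le> rate_small z \<alpha> c * S"
      using that A by (simp add: field_simps)
    then show ?thesis
      using decay_profile_le[OF c(1,2), of z \<alpha> S] c by linarith
  qed
  then show "eventually (\<lambda>S. decay_profile z \<alpha> S < \<epsilon>) at_top"
    unfolding eventually_at_top_linorder by blast
qed

text \<open>The value \<^term>\<open>\<alpha>2 r\<close> bounds \<open>V\<close> at the initial state; dividing by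
  \<^term>\<open>max (\<alpha>2 r) 1\<close> normalises it below 1, and \<^term>\<open>rate_large z \<alpha>1 (2 * \<alpha>2 r)\<close>
  bounds the decay rate of states whose \<open>V\<close>-value stays below \<^term>\<open>2 * \<alpha>2 r\<close>.\<close>

definition decay_bound ::
  "(real \<Rightarrow> real) \<Rightarrow> (real \<Rightarrow> real) \<Rightarrow> (real \<Rightarrow> real) \<Rightarrow> real \<Rightarrow> real \<Rightarrow> real" where
  "decay_bound z \<alpha>1 \<alpha>2 r T = min (\<alpha>2 r)
     (max (\<alpha>2 r) 1 * decay_profile z \<alpha>2 (T * (rate_large z \<alpha>1 (2 * \<alpha>2 r) / max (\<alpha>2 r) 1)))"

lemma le_decay_bound:
  assumes "w \<le> \<alpha>2 r"
    and dichotomy: "\<And>c. 0 < c \<Longrightarrow> c \<le> 1 \<Longrightarrow>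
      w \<le> c \<or> w \<le> max (\<alpha>2 r) 1 - rate_small z \<alpha>2 c * rate_large z \<alpha>1 (2 * \<alpha>2 r) * T"
  shows "w \<le> decay_bound z \<alpha>1 \<alpha>2 r T"
proof -
  define Q where "Q = max (\<alpha>2 r) 1"
  define B where "B = rate_large z \<alpha>1 (2 * \<alpha>2 r)"
  have "1 \<le> Q"
    by (simp add: Q_def)
  have "w / Q \<le> decay_profile z \<alpha>2 (T * (B / Q))"
  proof (rule decay_profile_greatest)
    fix c :: real
    assume c: "0 < c" "c \<le> 1"
    from dichotomy[OF c] show "w / Q \<le> max c (1 - rate_small z \<alpha>2 c * (T * (B / Q)))"
    proof
      assume "w \<le> c"
      also have "c \<le> c * Q"
        using c(1) \<open>1 \<le> Q\<close> by simp
      finally have "w / Q \<le> c"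
        using \<open>1 \<le> Q\<close> by (simp add: divide_le_eq)
      then show ?thesis
        by simp
    next
      assume "w \<le> max (\<alpha>2 r) 1 - rate_small z \<alpha>2 c * rate_large z \<alpha>1 (2 * \<alpha>2 r) * T"
      then have "w / Q \<le> 1 - rate_small z \<alpha>2 c * (T * (B / Q))"
        using \<open>1 \<le> Q\<close> by (simp add: Q_def B_def field_simps)
      then show ?thesis
        by simp
    qed
  qed
  then have "w \<le> Q * decay_profile z \<alpha>2 (T * (B / Q))"
    using \<open>1 \<le> Q\<close> by (simp add: divide_le_eq mult.commute)
  then show ?thesis
    using assms(1) by (simp add: decay_bound_def Q_def B_def)
qed

lemma decay_bound_nonneg: "class_K \<alpha>2 \<Longrightarrow> 0 \<le> r \<Longrightarrow> 0 \<le> decay_bound z \<alpha>1 \<alpha>2 r T"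
  unfolding decay_bound_def using class_K_nonneg decay_profile_nonneg by simp

lemma class_K_add_linear:
  fixes f :: "real \<Rightarrow> real"
  assumes cont: "continuous_on {0..} f" and mono: "\<And>r r'. 0 \<le> r \<Longrightarrow> r \<le> r' \<Longrightarrow> f r \<le> f r'"
    and "f 0 = 0" "0 < c"
  shows "class_K (\<lambda>r. f r + r * c)"
  unfolding class_K_def class_P_def strict_mono_on_def
proof (intro conjI allI impI)
  show "continuous_on {0..} (\<lambda>r. f r + r * c)"
    using cont by (intro continuous_intros)
  show "0 < f r + r * c" if "0 < r" for r
    using mono[of 0 r] assms(3,4) that by (simp add: add_nonneg_pos)
  show "f r + r * c < f r' + r' * c" if "r \<in> {0..} \<and> r' \<in> {0..} \<and> r < r'" for r r'
  proof -
    have "f r \<le> f r'"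
      using that by (intro mono) auto
    moreover have "r * c < r' * c"
      using that \<open>0 < c\<close> by simp
    ultimately show ?thesis
      by linarith
  qed
qed (use assms(3) in simp)

lemma class_KL_add_exp:
  fixes b :: "real \<Rightarrow> real \<Rightarrow> real"
  assumes cont: "continuous_on ({0..} \<times> {0..}) (\<lambda>(r, T). b r T)"
    and mono: "\<And>r r' T. 0 \<le> r \<Longrightarrow> r \<le> r' \<Longrightarrow> 0 \<le> T \<Longrightarrow> b r T \<le> b r' T"
    and antimono: "\<And>r T T'. 0 \<le> r \<Longrightarrow> 0 \<le> T \<Longrightarrow> T \<le> T' \<Longrightarrow> b r T' \<le> b r T"
    and zero: "\<And>T. 0 \<le> T \<Longrightarrow> b 0 T = 0"
    and tendsto: "\<And>r. 0 < r \<Longrightarrow> (b r \<longlongrightarrow> 0) at_top"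
  shows "class_KL (\<lambda>r T. b r T + r * exp (- T))"
proof -
  have cont': "continuous_on ({0..} \<times> {0..}) (\<lambda>p. b (fst p) (snd p))"
    using cont by (simp add: case_prod_beta')
  show ?thesis
    unfolding class_KL_def
  proof (intro conjI allI impI)
    show "continuous_on ({0..} \<times> {0..}) (\<lambda>(r, T). b r T + r * exp (- T))"
      using cont' unfolding case_prod_beta' by (intro continuous_intros)
    fix T :: real
    assume T: "0 \<le> T"
    have "continuous_on {0..} (\<lambda>r. (\<lambda>p. b (fst p) (snd p)) (r, T))"
      by (rule continuous_on_compose2[OF cont']) (use T in \<open>auto intro!: continuous_intros\<close>)
    then show "class_K (\<lambda>r. b r T + r * exp (- T))"
      using T by (intro class_K_add_linear mono zero) auto
  next
    fix r :: real
    assume r: "0 < r"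
    have "continuous_on {0..} (\<lambda>T. (\<lambda>p. b (fst p) (snd p)) (r, T))"
      by (rule continuous_on_compose2[OF cont']) (use r in \<open>auto intro!: continuous_intros\<close>)
    then show "continuous_on {0..} (\<lambda>T. b r T + r * exp (- T))"
      by (intro continuous_on_add) (auto intro!: continuous_intros)
    show "b r t + r * exp (- t) < b r s + r * exp (- s)" if "0 \<le> s" "s < t" for s t
    proof -
      have "b r t \<le> b r s"
        using that r by (intro antimono) auto
      moreover have "r * exp (- t) < r * exp (- s)"
        using that r by simp
      ultimately show ?thesis
        by linarith
    qed
    have "((\<lambda>T::real. exp (- T)) \<longlongrightarrow> 0) at_top"
      using filterlim_compose[OF exp_at_bot filterlim_uminus_at_bot_at_top] by simp
    from tendsto_add[OF tendsto[OF r] tendsto_mult[OF tendsto_const this, of r]]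
    show "((\<lambda>T. b r T + r * exp (- T)) \<longlongrightarrow> 0) at_top"
      by simp
  qed
qed

lemma class_KL_comp_add_exp:
  fixes w :: "real \<Rightarrow> real \<Rightarrow> real"
  assumes \<psi>: "class_K \<psi>"
    and cont: "continuous_on ({0..} \<times> {0..}) (\<lambda>(r, T). w r T)"
    and nonneg: "\<And>r T. 0 \<le> r \<Longrightarrow> 0 \<le> w r T"
    and mono: "\<And>r r' T. 0 \<le> r \<Longrightarrow> r \<le> r' \<Longrightarrow> 0 \<le> T \<Longrightarrow> w r T \<le> w r' T"
    and antimono: "\<And>r T T'. T \<le> T' \<Longrightarrow> w r T' \<le> w r T"
    and zero: "\<And>T. w 0 T = 0"
    and tendsto: "\<And>r. 0 < r \<Longrightarrow> (w r \<longlongrightarrow> 0) at_top"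
  shows "class_KL (\<lambda>r T. \<psi> (w r T) + r * exp (- T))"
proof (rule class_KL_add_exp)
  have "continuous_on ({0..} \<times> {0..}) (\<lambda>p. \<psi> (w (fst p) (snd p)))"
    using cont unfolding case_prod_beta'
    by (rule continuous_on_compose2[OF class_K_continuous_on[OF \<psi>]]) (auto intro: nonneg)
  then show "continuous_on ({0..} \<times> {0..}) (\<lambda>(r, T). \<psi> (w r T))"
    by (simp add: case_prod_beta')
  show "\<psi> (w r T) \<le> \<psi> (w r' T)" if "0 \<le> r" "r \<le> r'" "0 \<le> T" for r r' T
    using that by (intro class_K_mono[OF \<psi>] nonneg mono)
  show "\<psi> (w r T') \<le> \<psi> (w r T)" if "0 \<le> r" "0 \<le> T" "T \<le> T'" for r T T'
    using that by (intro class_K_mono[OF \<psi>] nonneg antimono)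
  show "\<psi> (w 0 T) = 0" for T
    using class_K_zero[OF \<psi>] by (simp add: zero)
  show "((\<lambda>T. \<psi> (w r T)) \<longlongrightarrow> 0) at_top" if "0 < r" for r
  proof -
    have "eventually (\<lambda>T. w r T \<in> {0..}) at_top"
      using nonneg that by (intro always_eventually allI) simp
    with tendsto[OF that] have "((\<lambda>T. \<psi> (w r T)) \<longlongrightarrow> \<psi> 0) at_top"
      by (intro continuous_on_tendsto_compose[OF class_K_continuous_on[OF \<psi>]]) auto
    then show ?thesis
      using class_K_zero[OF \<psi>] by simp
  qed
qed

lemma class_KL_decay_majorant:
  fixes \<Phi> \<sigma> \<alpha> \<psi> :: "real \<Rightarrow> real"
  assumes \<alpha>: "class_K \<alpha>" and \<psi>: "class_K \<psi>"
    and \<Phi>_cont: "continuous_on UNIV \<Phi>" and "antimono \<Phi>" and \<Phi>_nonneg: "\<And>S. 0 \<le> \<Phi> S"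
    and \<Phi>_tendsto: "(\<Phi> \<longlongrightarrow> 0) at_top"
    and \<sigma>_cont: "continuous_on UNIV \<sigma>" and "antimono \<sigma>" and \<sigma>_pos: "\<And>r. 0 < \<sigma> r"
  shows "class_KL (\<lambda>r T. \<psi> (min (\<alpha> r) (max (\<alpha> r) 1 * \<Phi> (T * \<sigma> r))) + r * exp (- T))"
proof -
  define w where "w r T = min (\<alpha> r) (max (\<alpha> r) 1 * \<Phi> (T * \<sigma> r))" for r T
  have w_nonneg: "0 \<le> w r T" if "0 \<le> r" for r T
    using class_K_nonneg[OF \<alpha> that] \<Phi>_nonneg by (simp add: w_def)
  have w_mono: "w r T \<le> w r' T" if "0 \<le> r" "r \<le> r'" "0 \<le> T" for r r' T
  proof -
    have "T * \<sigma> r' \<le> T * \<sigma> r"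
      using antimonoD[OF \<open>antimono \<sigma>\<close> \<open>r \<le> r'\<close>] \<open>0 \<le> T\<close> by (rule mult_left_mono)
    then have "\<Phi> (T * \<sigma> r) \<le> \<Phi> (T * \<sigma> r')"
      by (rule antimonoD[OF \<open>antimono \<Phi>\<close>])
    then show ?thesis
      unfolding w_def using class_K_mono[OF \<alpha> that(1,2)] \<Phi>_nonneg by (intro min.mono mult_mono) auto
  qed
  have w_antimono: "w r T' \<le> w r T" if "T \<le> T'" for r T T'
  proof -
    have "T * \<sigma> r \<le> T' * \<sigma> r"
      using \<sigma>_pos[of r] that by (simp add: mult_right_mono)
    then have "\<Phi> (T' * \<sigma> r) \<le> \<Phi> (T * \<sigma> r)"
      by (rule antimonoD[OF \<open>antimono \<Phi>\<close>])
    then show ?thesis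
      unfolding w_def by (intro min.mono mult_left_mono) auto
  qed
  have w_tendsto: "(w r \<longlongrightarrow> 0) at_top" if "0 < r" for r
  proof -
    have "filterlim (\<lambda>T. T * \<sigma> r) at_top at_top"
      by (rule filterlim_at_top_mult_tendsto_pos[OF tendsto_const \<sigma>_pos filterlim_ident])
    then have "((\<lambda>T. \<Phi> (T * \<sigma> r)) \<longlongrightarrow> 0) at_top"
      by (rule filterlim_compose[OF \<Phi>_tendsto])
    then have "(w r \<longlongrightarrow> min (\<alpha> r) (max (\<alpha> r) 1 * 0)) at_top"
      unfolding w_def by (intro tendsto_min tendsto_mult tendsto_const)
    then show ?thesis
      using class_K_pos[OF \<alpha> that] by simp
  qed
  have "continuous_on ({0..} \<times> {0..}) (\<lambda>p. w (fst p) (snd p))"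
    unfolding w_def
    by (intro continuous_on_min continuous_on_mult continuous_on_max continuous_on_const
        continuous_on_compose2[OF class_K_continuous_on[OF \<alpha>] continuous_on_fst]
        continuous_on_compose2[OF \<Phi>_cont] continuous_on_snd
        continuous_on_compose2[OF \<sigma>_cont continuous_on_fst]) auto
  moreover have "w 0 T = 0" for T
    using class_K_zero[OF \<alpha>] \<Phi>_nonneg by (simp add: w_def)
  ultimately have "class_KL (\<lambda>r T. \<psi> (w r T) + r * exp (- T))"
    using w_nonneg w_mono w_antimono w_tendsto
    by (intro class_KL_comp_add_exp[OF \<psi>]) (auto simp: case_prod_beta')
  then show ?thesis
    by (simp add: w_def)
qed

lemma KL_majorant:
  fixes \<Phi> \<sigma> \<alpha> \<psi> :: "real \<Rightarrow> real"
  assumes \<alpha>: "class_K \<alpha>" and \<psi>: "class_K \<psi>"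
    and \<Phi>_nonneg: "\<And>S. 0 \<le> S \<Longrightarrow> 0 \<le> \<Phi> S"
    and \<Phi>_antimono: "\<And>S S'. 0 \<le> S \<Longrightarrow> S \<le> S' \<Longrightarrow> \<Phi> S' \<le> \<Phi> S"
    and \<Phi>_tendsto: "(\<Phi> \<longlongrightarrow> 0) at_top"
    and \<sigma>_pos: "\<And>r. 0 \<le> r \<Longrightarrow> 0 < \<sigma> r"
    and \<sigma>_antimono: "\<And>r r'. 0 \<le> r \<Longrightarrow> r \<le> r' \<Longrightarrow> \<sigma> r' \<le> \<sigma> r"
  obtains \<beta> where "class_KL \<beta>"
    "\<And>r T. 0 \<le> r \<Longrightarrow> 0 \<le> T \<Longrightarrow> \<psi> (min (\<alpha> r) (max (\<alpha> r) 1 * \<Phi> (T * \<sigma> r))) \<le> \<beta> r T"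
proof -
  obtain \<Phi>' where \<Phi>': "continuous_on UNIV \<Phi>'" "antimono \<Phi>'" "\<And>S. 0 \<le> \<Phi>' S" "(\<Phi>' \<longlongrightarrow> 0) at_top"
    and \<Phi>_le: "\<And>S. 0 \<le> S \<Longrightarrow> \<Phi> S \<le> \<Phi>' S"
    using vanishing_antimono_continuous_majorant[of \<Phi>, OF \<Phi>_nonneg \<Phi>_antimono \<Phi>_tendsto] by blast
  obtain \<sigma>' where \<sigma>': "continuous_on UNIV \<sigma>'" "antimono \<sigma>'" "\<And>r. 0 < \<sigma>' r"
    and \<sigma>'_le: "\<And>r. 0 \<le> r \<Longrightarrow> \<sigma>' r \<le> \<sigma> r"
    using positive_antimono_continuous_minorant[of \<sigma>, OF \<sigma>_pos \<sigma>_antimono] by blast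
  show ?thesis
  proof (rule that[OF class_KL_decay_majorant[OF \<alpha> \<psi> \<Phi>' \<sigma>']])
    fix r T :: real
    assume "0 \<le> r" "0 \<le> T"
    then have le: "T * \<sigma>' r \<le> T * \<sigma> r" and nonneg: "0 \<le> T * \<sigma>' r"
      using \<sigma>'_le[of r] \<sigma>'(3)[of r] by (simp_all add: mult_left_mono)
    have "\<Phi> (T * \<sigma> r) \<le> \<Phi>' (T * \<sigma>' r)"
      using \<Phi>_antimono[OF nonneg le] \<Phi>_le[OF nonneg] by linarith
    then have "min (\<alpha> r) (max (\<alpha> r) 1 * \<Phi> (T * \<sigma> r)) \<le> min (\<alpha> r) (max (\<alpha> r) 1 * \<Phi>' (T * \<sigma>' r))"
      by (intro min.mono mult_left_mono) auto
    moreover have "0 \<le> min (\<alpha> r) (max (\<alpha> r) 1 * \<Phi> (T * \<sigma> r))"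
      using class_K_nonneg[OF \<alpha> \<open>0 \<le> r\<close>] \<Phi>_nonneg \<sigma>_pos[OF \<open>0 \<le> r\<close>] \<open>0 \<le> T\<close> by simp
    ultimately have "\<psi> (min (\<alpha> r) (max (\<alpha> r) 1 * \<Phi> (T * \<sigma> r)))
        \<le> \<psi> (min (\<alpha> r) (max (\<alpha> r) 1 * \<Phi>' (T * \<sigma>' r)))"
      by (intro class_K_mono[OF \<psi>])
    moreover have "0 \<le> r * exp (- T)"
      using \<open>0 \<le> r\<close> by simp
    ultimately show "\<psi> (min (\<alpha> r) (max (\<alpha> r) 1 * \<Phi> (T * \<sigma> r)))
        \<le> \<psi> (min (\<alpha> r) (max (\<alpha> r) 1 * \<Phi>' (T * \<sigma>' r))) + r * exp (- T)"
      by linarith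
  qed
qed

lemma KL_majorant_decay_bound:
  assumes z: "class_P z" and \<alpha>1: "class_Kinf \<alpha>1" and \<alpha>2: "class_K \<alpha>2" and \<psi>: "class_K \<psi>"
  obtains \<beta> where "class_KL \<beta>"
    "\<And>r T. 0 \<le> r \<Longrightarrow> 0 \<le> T \<Longrightarrow> \<psi> (decay_bound z \<alpha>1 \<alpha>2 r T) \<le> \<beta> r T"
proof (rule KL_majorant[OF \<alpha>2 \<psi>, of "decay_profile z \<alpha>2" "\<lambda>r. rate_large z \<alpha>1 (2 * \<alpha>2 r) / max (\<alpha>2 r) 1"])
  show "(decay_profile z \<alpha>2 \<longlongrightarrow> 0) at_top"
    by (rule decay_profile_tendsto[OF z \<alpha>2])
  show "0 < rate_large z \<alpha>1 (2 * \<alpha>2 r) / max (\<alpha>2 r) 1" for r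
    using rate_large_pos[OF z \<alpha>1] by simp
  show "rate_large z \<alpha>1 (2 * \<alpha>2 r') / max (\<alpha>2 r') 1 \<le> rate_large z \<alpha>1 (2 * \<alpha>2 r) / max (\<alpha>2 r) 1"
    if "0 \<le> r" "r \<le> r'" for r r'
    using class_K_mono[OF \<alpha>2 that] rate_large_nonneg[OF z]
    by (intro frac_le rate_large_antimono[OF z]) auto
  show "decay_profile z \<alpha>2 S' \<le> decay_profile z \<alpha>2 S" if "0 \<le> S" "S \<le> S'" for S S'
    using decay_profile_antimono[OF z that] .
qed (auto simp: decay_bound_def decay_profile_nonneg)

section \<open>A comparison principle for Dini derivatives\<close>

lemma last_crossing:
  fixes y :: "real \<Rightarrow> real"
  assumes "a \<le> b" and y: "continuous_on {a..b} y" and "y a \<le> L" "L < y b"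
  obtains s where "a \<le> s" "s < b" "y s = L" "\<And>\<tau>. s \<le> \<tau> \<Longrightarrow> \<tau> \<le> b \<Longrightarrow> L \<le> y \<tau>"
proof -
  define S where "S = {\<tau> \<in> {a..b}. y \<tau> \<le> L}"
  have "closed S"
    unfolding S_def by (rule continuous_on_closed_Collect_le[OF y continuous_on_const]) simp
  moreover have "a \<in> S"
    using assms by (simp add: S_def)
  moreover have S_bdd: "bdd_above S"
    by (rule bdd_aboveI[of _ b]) (simp add: S_def)
  ultimately have "Sup S \<in> S"
    by (intro closed_contains_Sup) auto
  then have s: "a \<le> Sup S" "Sup S \<le> b" "y (Sup S) \<le> L"
    by (auto simp: S_def)
  with \<open>L < y b\<close> have "Sup S < b"
    by (cases "Sup S = b") auto
  have "continuous_on {Sup S..b} y"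
    using y by (rule continuous_on_subset) (use s in auto)
  then obtain t where t: "Sup S \<le> t" "t \<le> b" "y t = L"
    using IVT'[of y "Sup S" L b] s \<open>L < y b\<close> by auto
  then have "t \<le> Sup S"
    using s by (intro cSup_upper S_bdd) (simp add: S_def)
  show ?thesis
  proof (rule that[OF s(1) \<open>Sup S < b\<close>])
    show "y (Sup S) = L"
      using t \<open>t \<le> Sup S\<close> by simp
    show "L \<le> y \<tau>" if "Sup S \<le> \<tau>" "\<tau> \<le> b" for \<tau>
    proof (cases "\<tau> = Sup S")
      case False
      then have "\<tau> \<notin> S"
        using that cSup_upper[OF _ S_bdd, of \<tau>] by auto
      then show ?thesis
        using that s by (auto simp: S_def)
    qed (use t \<open>t \<le> Sup S\<close> in simp)
  qed
qed

lemma local_strict_descent_imp_le: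
  fixes z :: "real \<Rightarrow> real"
  assumes "a \<le> b" "continuous_on {a..b} z"
    and descent: "\<And>t. a \<le> t \<Longrightarrow> t < b \<Longrightarrow> \<exists>h>0. t + h \<le> b \<and> z (t + h) < z t"
  shows "z b \<le> z a"
proof (rule ccontr)
  assume "\<not> z b \<le> z a"
  then obtain s where "a \<le> s" "s < b" "z s = z a" and above: "\<And>\<tau>. s \<le> \<tau> \<Longrightarrow> \<tau> \<le> b \<Longrightarrow> z a \<le> z \<tau>"
    using last_crossing[OF assms(1,2) order_refl] by auto
  moreover obtain h where "0 < h" "s + h \<le> b" "z (s + h) < z s"
    using descent[OF \<open>a \<le> s\<close> \<open>s < b\<close>] by blast
  moreover have "z a \<le> z (s + h)"
    using above \<open>0 < h\<close> \<open>s + h \<le> b\<close> by simp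
  ultimately show False
    by simp
qed

lemma Dini_local_step:
  fixes y g :: "real \<Rightarrow> real"
  assumes "t < b" and g: "g integrable_on {t..b}" and g_right: "continuous (at_right t) g"
    and Dini: "Limsup (at_right 0) (\<lambda>h. ereal ((y (t + h) - y t) / h)) \<le> ereal (g t)"
    and "0 < \<epsilon>"
  shows "\<exists>h>0. t + h \<le> b \<and> y (t + h) - y t < integral {t..t + h} g + \<epsilon> * h"
proof -
  have "Limsup (at_right 0) (\<lambda>h. ereal ((y (t + h) - y t) / h)) < ereal (g t + \<epsilon> / 2)"
    using Dini \<open>0 < \<epsilon>\<close> by (simp add: le_less_trans)
  then have quotient: "eventually (\<lambda>h. (y (t + h) - y t) / h < g t + \<epsilon> / 2) (at_right 0)"
    by (auto dest: Limsup_lessD)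
  have "eventually (\<lambda>\<tau>. g t - \<epsilon> / 2 < g \<tau>) (at_right t)"
    using g_right \<open>0 < \<epsilon>\<close> by (auto simp: continuous_within intro: order_tendstoD)
  then obtain \<delta> where "t < \<delta>" and \<delta>: "\<And>\<tau>. t < \<tau> \<Longrightarrow> \<tau> < \<delta> \<Longrightarrow> g t - \<epsilon> / 2 < g \<tau>"
    unfolding eventually_at_right_field by blast
  have "eventually (\<lambda>h. 0 < h \<and> h < min (b - t) (\<delta> - t)) (at_right (0::real))"
    unfolding eventually_at_right_field using \<open>t < b\<close> \<open>t < \<delta>\<close> by (intro exI[of _ "min (b - t) (\<delta> - t)"]) auto
  then obtain h where h: "(y (t + h) - y t) / h < g t + \<epsilon> / 2" "0 < h" "h < b - t" "h < \<delta> - t"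
    using eventually_happens'[OF trivial_limit_at_right_real eventually_conj[OF quotient]] by auto
  have "h * (g t - \<epsilon> / 2) = integral {t..t + h} (\<lambda>_. g t - \<epsilon> / 2)"
    using h(2) by simp
  also have "\<dots> \<le> integral {t..t + h} g"
  proof (rule integral_le[OF integrable_const_ivl integrable_on_subinterval[OF g]])
    show "g t - \<epsilon> / 2 \<le> g \<tau>" if "\<tau> \<in> {t..t + h}" for \<tau>
      using that h \<delta>[of \<tau>] \<open>0 < \<epsilon>\<close> by (cases "\<tau> = t") auto
  qed (use h in auto)
  finally have "h * (g t - \<epsilon> / 2) \<le> integral {t..t + h} g" .
  moreover have "y (t + h) - y t < h * (g t + \<epsilon> / 2)"
    using h(1,2) by (simp add: pos_divide_less_eq mult.commute)
  ultimately show ?thesis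
    using h(2,3) by (intro exI[of _ h]) (auto simp: algebra_simps)
qed

lemma Dini_le_integral:
  fixes y g :: "real \<Rightarrow> real"
  assumes "a \<le> b" and y: "continuous_on {a..b} y" and g: "g integrable_on {a..b}"
    and g_right: "\<And>t. a \<le> t \<Longrightarrow> t < b \<Longrightarrow> continuous (at_right t) g"
    and Dini: "\<And>t. a \<le> t \<Longrightarrow> t < b \<Longrightarrow> Limsup (at_right 0) (\<lambda>h. ereal ((y (t + h) - y t) / h)) \<le> ereal (g t)"
  shows "y b - y a \<le> integral {a..b} g"
proof (rule field_le_epsilon)
  fix e :: real
  assume "0 < e"
  define \<epsilon> where "\<epsilon> = e / (b - a + 1)"
  have "0 < \<epsilon>" "\<epsilon> * (b - a) \<le> e"
    using \<open>0 < e\<close> \<open>a \<le> b\<close> by (auto simp: \<epsilon>_def field_simps)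
  define z where "z t = y t - integral {a..t} g - \<epsilon> * (t - a)" for t
  have "z b \<le> z a"
  proof (rule local_strict_descent_imp_le[OF \<open>a \<le> b\<close>])
    show "continuous_on {a..b} z"
      unfolding z_def by (intro continuous_on_diff y indefinite_integral_continuous_1[OF g] continuous_intros)
    fix t
    assume t: "a \<le> t" "t < b"
    then obtain h where h: "0 < h" "t + h \<le> b" "y (t + h) - y t < integral {t..t + h} g + \<epsilon> * h"
      using Dini_local_step[OF t(2) integrable_on_subinterval[OF g] g_right[OF t] Dini[OF t] \<open>0 < \<epsilon>\<close>]
      by auto
    moreover have "integral {a..t} g + integral {t..t + h} g = integral {a..t + h} g"
      using t h by (intro Henstock_Kurzweil_Integration.integral_combine integrable_on_subinterval[OF g]) auto
    ultimately show "\<exists>h>0. t + h \<le> b \<and> z (t + h) < z t"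
      by (intro exI[of _ h]) (auto simp: z_def algebra_simps)
  qed
  then show "y b - y a \<le> integral {a..b} g + e"
    using \<open>\<epsilon> * (b - a) \<le> e\<close> by (simp add: z_def)
qed

lemma PC_norm_le_input_norm:
  assumes "u \<in> PC" "0 \<le> t"
  shows "norm (u t) \<le> input_norm u"
proof -
  have "bounded (u ` {0..})"
    using assms(1) by (simp add: PC_def)
  then have "bdd_above ((\<lambda>s. norm (u s)) ` {0..})"
    by (auto simp: bounded_iff bdd_above_def)
  then show ?thesis
    unfolding input_norm_def using assms(2) by (intro cSUP_upper) auto
qed

lemma PC_input_norm_nonneg:
  assumes "u \<in> PC"
  shows "0 \<le> input_norm u"
  using norm_ge_zero PC_norm_le_input_norm[OF assms order_refl] by (rule order_trans)

lemma PC_continuous_at_right: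
  assumes "u \<in> PC" "class_K chi" "0 \<le> t"
  shows "continuous (at_right t) (\<lambda>\<tau>. chi (norm (u \<tau>)))"
proof -
  have "(u \<longlongrightarrow> u t) (at_right t)"
    using assms by (simp add: PC_def continuous_within)
  then have "((\<lambda>\<tau>. chi (norm (u \<tau>))) \<longlongrightarrow> chi (norm (u t))) (at_right t)"
    by (intro continuous_on_tendsto_compose[OF class_K_continuous_on[OF assms(2)]] tendsto_norm) auto
  then show ?thesis
    by (simp add: continuous_within)
qed

lemma PC_finite_discontinuities:
  assumes "u \<in> PC"
  shows "finite ({a..b} \<inter> {s \<in> {0..}. \<not> continuous (at s within {0..}) u})"
    (is "finite ({a..b} \<inter> ?D)")
proof (rule ccontr)
  assume "infinite ({a..b} \<inter> ?D)"
  then obtain x where "x islimpt ({a..b} \<inter> ?D)"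
    using compact_eq_Bolzano_Weierstrass[of "{a..b}"] by auto
  then have "x islimpt ?D"
    by (rule islimpt_subset) auto
  then show False
    using assms by (simp add: PC_def)
qed

lemma PC_integrable:
  assumes u: "u \<in> PC" and chi: "class_K chi" and "0 \<le> a"
  shows "(\<lambda>\<tau>. chi (norm (u \<tau>))) integrable_on {a..b}"
proof -
  define f where "f = (\<lambda>\<tau>. chi (norm (u \<tau>)))"
  define F where "F = {a..b} \<inter> {s \<in> {0..}. \<not> continuous (at s within {0..}) u}"
  have "finite F"
    unfolding F_def using u by (rule PC_finite_discontinuities)
  have "continuous_on ({a..b} - F) u"
    unfolding continuous_on_eq_continuous_within
  proof
    fix x
    assume "x \<in> {a..b} - F"
    then have "continuous (at x within {0..}) u"
      using \<open>0 \<le> a\<close> by (auto simp: F_def)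
    then show "continuous (at x within ({a..b} - F)) u"
      by (rule continuous_within_subset) (use \<open>0 \<le> a\<close> in auto)
  qed
  then have "continuous_on ({a..b} - F) f"
    unfolding f_def by (intro continuous_on_compose2[OF class_K_continuous_on[OF chi]] continuous_on_norm) auto
  moreover have lebesgue: "{a..b} - F \<in> sets lebesgue"
    using \<open>finite F\<close> by (intro sets.Diff) (auto intro: negligible_imp_sets)
  ultimately have "f \<in> borel_measurable (lebesgue_on ({a..b} - F))"
    by (rule continuous_imp_measurable_on_sets_lebesgue)
  then have "f measurable_on ({a..b} - F)"
    using measurable_on_iff_borel_measurable[OF lebesgue] by blast
  then have "f measurable_on {a..b}"
    by (rule measurable_on_spike_set) (use \<open>finite F\<close> in \<open>auto intro: negligible_subset[of F]\<close>)
  then have measurable: "f \<in> borel_measurable (lebesgue_on {a..b})"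
    using measurable_on_iff_borel_measurable[of "{a..b}"] by auto
  have bounded: "norm (f \<tau>) \<le> chi (input_norm u)" if "\<tau> \<in> {a..b}" for \<tau>
  proof -
    have "norm (u \<tau>) \<le> input_norm u"
      using that \<open>0 \<le> a\<close> by (intro PC_norm_le_input_norm[OF u]) auto
    then have "chi (norm (u \<tau>)) \<le> chi (input_norm u)"
      by (rule class_K_mono[OF chi norm_ge_zero])
    then show ?thesis
      using class_K_nonneg[OF chi norm_ge_zero[of "u \<tau>"]] by (simp add: f_def)
  qed
  have "f integrable_on {a..b}"
    by (rule measurable_bounded_by_integrable_imp_integrable[OF measurable integrable_const_ivl bounded]) auto
  then show ?thesis
    unfolding f_def .
qed

section \<open>Lyapunov functions along trajectories\<close>

lemma control_system_initial:
  assumes "control_system phi tm" "0 \<le> t0" "u \<in> PC"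
  shows "phi t0 t0 x0 u = x0" and "ereal t0 < tm t0 x0 u"
proof -
  from assms(1) have "\<forall>t0\<ge>0. \<forall>x0. \<forall>u\<in>PC. ereal t0 < tm t0 x0 u"
    unfolding control_system_def by (elim conjE)
  then show "ereal t0 < tm t0 x0 u"
    using assms(2,3) by blast
  from assms(1) have "\<forall>t0\<ge>0. \<forall>x0. \<forall>u\<in>PC. phi t0 t0 x0 u = x0"
    unfolding control_system_def by (elim conjE)
  then show "phi t0 t0 x0 u = x0"
    using assms(2,3) by blast
qed

lemma control_system_continuous_on:
  assumes "control_system phi tm" "0 \<le> t0" "u \<in> PC"
  shows "continuous_on (dom_phi tm t0 x0 u) (\<lambda>t. phi t t0 x0 u)"
proof -
  from assms(1) have "\<forall>t0\<ge>0. \<forall>x0. \<forall>u\<in>PC. continuous_on (dom_phi tm t0 x0 u) (\<lambda>t. phi t t0 x0 u)"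
    unfolding control_system_def by (elim conjE)
  then show ?thesis
    using assms(2,3) by blast
qed

lemma control_system_cocycle:
  assumes "control_system phi tm" "0 \<le> t0" "u \<in> PC" "t0 \<le> \<tau>" "\<tau> \<le> t" "ereal t < tm t0 x0 u"
  shows "phi t \<tau> (phi \<tau> t0 x0 u) u = phi t t0 x0 u"
proof -
  from assms(1) have "\<forall>t0\<ge>0. \<forall>x0. \<forall>u\<in>PC. \<forall>\<tau> t. t0 \<le> \<tau> \<longrightarrow> \<tau> \<le> t \<longrightarrow> ereal t < tm t0 x0 u \<longrightarrow>
      t \<in> dom_phi tm \<tau> (phi \<tau> t0 x0 u) u \<and> phi t \<tau> (phi \<tau> t0 x0 u) u = phi t t0 x0 u"
    unfolding control_system_def by (elim conjE)
  then show ?thesis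
    using assms(2-) by blast
qed

locale Lyapunov_system =
  fixes phi :: "real \<Rightarrow> real \<Rightarrow> 'x::real_normed_vector \<Rightarrow> (real \<Rightarrow> 'u::real_normed_vector) \<Rightarrow> 'x"
    and tm :: "real \<Rightarrow> 'x \<Rightarrow> (real \<Rightarrow> 'u) \<Rightarrow> ereal"
    and V :: "real \<Rightarrow> 'x \<Rightarrow> real"
    and \<alpha>1 \<alpha>2 eta chi :: "real \<Rightarrow> real"
  assumes system: "control_system phi tm"
    and V_continuous: "continuous_on ({0..} \<times> UNIV) (\<lambda>(t, x). V t x)"
    and \<alpha>1: "class_Kinf \<alpha>1" and \<alpha>2: "class_Kinf \<alpha>2"
    and V_lower: "\<And>t x. 0 \<le> t \<Longrightarrow> \<alpha>1 (norm x) \<le> V t x"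
    and V_upper: "\<And>t x. 0 \<le> t \<Longrightarrow> V t x \<le> \<alpha>2 (norm x)"
    and eta: "class_P eta" and chi: "class_K chi"
    and dissipation: "\<And>x u t. u \<in> PC \<Longrightarrow> 0 \<le> t \<Longrightarrow>
      lie_deriv phi V u t x \<le> ereal (- eta (norm x) + chi (norm (u t)))"

lemma coercive_iISS_LF_imp_Lyapunov_system:
  assumes "control_system phi tm" and LF: "coercive_iISS_LF_with phi V eta chi"
  obtains \<alpha>1 \<alpha>2 where "Lyapunov_system phi tm V \<alpha>1 \<alpha>2 eta chi"
proof -
  have "\<exists>\<alpha>1 \<alpha>2. class_Kinf \<alpha>1 \<and> class_Kinf \<alpha>2 \<and>
      (\<forall>t\<ge>0. \<forall>x. \<alpha>1 (norm x) \<le> V t x \<and> V t x \<le> \<alpha>2 (norm x))"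
    using LF by (simp add: coercive_iISS_LF_with_def)
  then obtain \<alpha>1 \<alpha>2 where "class_Kinf \<alpha>1" "class_Kinf \<alpha>2"
    and "\<forall>t\<ge>0. \<forall>x. \<alpha>1 (norm x) \<le> V t x \<and> V t x \<le> \<alpha>2 (norm x)"
    by blast
  then have "Lyapunov_system phi tm V \<alpha>1 \<alpha>2 eta chi"
    using assms by unfold_locales (simp_all add: coercive_iISS_LF_with_def)
  then show ?thesis
    by (rule that)
qed

context Lyapunov_system
begin

abbreviation V_along :: "real \<Rightarrow> 'x \<Rightarrow> (real \<Rightarrow> 'u) \<Rightarrow> real \<Rightarrow> real" where
  "V_along t0 x0 u t \<equiv> V t (phi t t0 x0 u)"

lemma \<alpha>2_class_K: "class_K \<alpha>2"
  using \<alpha>2 by (rule class_Kinf_imp_class_K)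

lemma continuous_on_V_along:
  assumes "0 \<le> t0" "u \<in> PC" "t0 \<le> a" "ereal b < tm t0 x0 u"
  shows "continuous_on {a..b} (V_along t0 x0 u)"
proof -
  have sub: "{a..b} \<subseteq> dom_phi tm t0 x0 u"
  proof
    fix t
    assume "t \<in> {a..b}"
    then have "ereal t \<le> ereal b" "t0 \<le> t"
      using assms(3) by auto
    then show "t \<in> dom_phi tm t0 x0 u"
      using order.strict_trans1[OF _ assms(4)] by (simp add: dom_phi_def)
  qed
  have "continuous_on {a..b} (\<lambda>t. phi t t0 x0 u)"
    by (rule continuous_on_subset[OF control_system_continuous_on[OF system assms(1,2)] sub])
  then have "continuous_on {a..b} (\<lambda>t. (t, phi t t0 x0 u))"
    by (intro continuous_on_Pair continuous_on_id)
  then have "continuous_on {a..b} (\<lambda>t. (\<lambda>(t, x). V t x) (t, phi t t0 x0 u))"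
    by (rule continuous_on_compose2[OF V_continuous]) (use assms in auto)
  then show ?thesis
    by simp
qed

lemma Dini_V_along_le:
  assumes "0 \<le> t0" "u \<in> PC" "t0 \<le> \<tau>" "ereal \<tau> < tm t0 x0 u"
  shows "Limsup (at_right 0) (\<lambda>h. ereal ((V_along t0 x0 u (\<tau> + h) - V_along t0 x0 u \<tau>) / h))
    \<le> ereal (- eta (norm (phi \<tau> t0 x0 u)) + chi (norm (u \<tau>)))"
proof -
  obtain c where "\<tau> < c" "ereal c < tm t0 x0 u"
    using ereal_dense2[OF assms(4)] by auto
  have "eventually (\<lambda>h. phi (\<tau> + h) \<tau> (phi \<tau> t0 x0 u) u = phi (\<tau> + h) t0 x0 u) (at_right 0)"
    unfolding eventually_at_right_field
  proof (intro exI[of _ "c - \<tau>"] conjI allI impI)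
    fix h :: real
    assume "0 < h" "h < c - \<tau>"
    then have "ereal (\<tau> + h) < ereal c"
      by simp
    then have "ereal (\<tau> + h) < tm t0 x0 u"
      using \<open>ereal c < tm t0 x0 u\<close> by (rule order.strict_trans)
    then show "phi (\<tau> + h) \<tau> (phi \<tau> t0 x0 u) u = phi (\<tau> + h) t0 x0 u"
      using \<open>0 < h\<close> by (intro control_system_cocycle[OF system assms(1,2,3)]) auto
  qed (use \<open>\<tau> < c\<close> in simp)
  then have "Limsup (at_right 0) (\<lambda>h. ereal ((V_along t0 x0 u (\<tau> + h) - V_along t0 x0 u \<tau>) / h))
      = lie_deriv phi V u \<tau> (phi \<tau> t0 x0 u)"
    unfolding lie_deriv_def by (intro Limsup_eq) (auto elim: eventually_mono)
  also have "\<dots> \<le> ereal (- eta (norm (phi \<tau> t0 x0 u)) + chi (norm (u \<tau>)))"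
    using assms by (intro dissipation) auto
  finally show ?thesis .
qed

lemma V_along_decrease:
  assumes t0: "0 \<le> t0" and u: "u \<in> PC" and "t0 \<le> s" "s \<le> t" and t: "ereal t < tm t0 x0 u"
    and rate: "\<And>\<tau>. s \<le> \<tau> \<Longrightarrow> \<tau> \<le> t \<Longrightarrow> m \<le> eta (norm (phi \<tau> t0 x0 u))"
  shows "V_along t0 x0 u t - V_along t0 x0 u s \<le> - m * (t - s) + integral {s..t} (\<lambda>\<tau>. chi (norm (u \<tau>)))"
proof -
  define g where "g \<tau> = chi (norm (u \<tau>)) - m" for \<tau>
  have int: "(\<lambda>\<tau>. chi (norm (u \<tau>))) integrable_on {s..t}"
    using assms by (intro PC_integrable[OF u chi]) auto
  have "V_along t0 x0 u t - V_along t0 x0 u s \<le> integral {s..t} g"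
  proof (rule Dini_le_integral[OF \<open>s \<le> t\<close>])
    show "continuous_on {s..t} (V_along t0 x0 u)"
      using assms by (intro continuous_on_V_along) auto
    show "g integrable_on {s..t}"
      unfolding g_def by (intro integrable_diff integrable_const_ivl int)
    show "continuous (at_right \<tau>) g" if "s \<le> \<tau>" for \<tau>
      unfolding g_def using that assms by (intro continuous_diff continuous_const PC_continuous_at_right[OF u chi]) auto
    show "Limsup (at_right 0) (\<lambda>h. ereal ((V_along t0 x0 u (\<tau> + h) - V_along t0 x0 u \<tau>) / h)) \<le> ereal (g \<tau>)"
      if "s \<le> \<tau>" "\<tau> < t" for \<tau>
    proof -
      have "ereal \<tau> < tm t0 x0 u"
        using that(2) t by (simp add: order.strict_trans[of "ereal \<tau>" "ereal t"])
      then have "Limsup (at_right 0) (\<lambda>h. ereal ((V_along t0 x0 u (\<tau> + h) - V_along t0 x0 u \<tau>) / h))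
          \<le> ereal (- eta (norm (phi \<tau> t0 x0 u)) + chi (norm (u \<tau>)))"
        using that assms by (intro Dini_V_along_le) auto
      also have "\<dots> \<le> ereal (g \<tau>)"
        using rate[of \<tau>] that by (simp add: g_def)
      finally show ?thesis .
    qed
  qed
  also have "integral {s..t} g = - m * (t - s) + integral {s..t} (\<lambda>\<tau>. chi (norm (u \<tau>)))"
    unfolding g_def using \<open>s \<le> t\<close> by (simp add: integral_diff[OF int integrable_const_ivl])
  finally show ?thesis .
qed

lemma V_along_increase_le_integral:
  assumes "0 \<le> t0" "u \<in> PC" "t0 \<le> s" "s \<le> t" "ereal t < tm t0 x0 u"
  shows "V_along t0 x0 u t - V_along t0 x0 u s \<le> integral {s..t} (\<lambda>\<tau>. chi (norm (u \<tau>)))"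
  using V_along_decrease[OF assms, of 0] class_P_nonneg[OF eta] by simp

lemma rate_product_le_V_along:
  assumes "class_P z" "0 \<le> t0" "t0 \<le> \<tau>" "c \<le> V_along t0 x0 u \<tau>" "V_along t0 x0 u \<tau> \<le> R"
  shows "rate_small z \<alpha>2 c * rate_large z \<alpha>1 R \<le> z (norm (phi \<tau> t0 x0 u))"
  using assms V_lower[of \<tau> "phi \<tau> t0 x0 u"] V_upper[of \<tau> "phi \<tau> t0 x0 u"]
  by (intro rate_product_le) auto

theorem forward_complete:
  assumes BIC: "BIC phi tm"
  shows "forward_complete tm"
  unfolding forward_complete_def
proof (intro allI impI ballI)
  fix t0 :: real and x0 :: 'x and u :: "real \<Rightarrow> 'u"
  assume t0: "0 \<le> t0" and u: "u \<in> PC"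
  show "tm t0 x0 u = \<infinity>"
  proof (rule ccontr)
    assume "tm t0 x0 u \<noteq> \<infinity>"
    moreover have "ereal t0 < tm t0 x0 u"
      by (rule control_system_initial(2)[OF system t0 u])
    ultimately obtain T where T: "tm t0 x0 u = ereal T"
      by (cases "tm t0 x0 u") auto
    define K where "K = V t0 x0 + integral {t0..T} (\<lambda>\<tau>. chi (norm (u \<tau>)))"
    obtain b where b: "\<And>r. b \<le> r \<Longrightarrow> K < \<alpha>1 r"
      using \<alpha>1 unfolding class_Kinf_def filterlim_at_top_dense eventually_at_top_linorder by blast
    have "norm (phi t t0 x0 u) \<le> b" if "t \<in> dom_phi tm t0 x0 u" for t
    proof -
      have t: "t0 \<le> t" "ereal t < tm t0 x0 u" "t < T"
        using that T by (auto simp: dom_phi_def)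
      have "V_along t0 x0 u t - V_along t0 x0 u t0 \<le> integral {t0..t} (\<lambda>\<tau>. chi (norm (u \<tau>)))"
        using t0 u t by (intro V_along_increase_le_integral) auto
      also have "\<dots> \<le> integral {t0..T} (\<lambda>\<tau>. chi (norm (u \<tau>)))"
        using t t0 class_K_nonneg[OF chi] by (intro integral_subset_le PC_integrable[OF u chi]) auto
      finally have "\<alpha>1 (norm (phi t t0 x0 u)) \<le> K"
        using V_lower[of t "phi t t0 x0 u"] control_system_initial(1)[OF system t0 u] t t0
        by (simp add: K_def)
      then show ?thesis
        using b[of "norm (phi t t0 x0 u)"] by force
    qed
    then have "bounded ((\<lambda>t. phi t t0 x0 u) ` dom_phi tm t0 x0 u)"
      unfolding bounded_iff by blast
    moreover have "\<not> bounded ((\<lambda>t. phi t t0 x0 u) ` dom_phi tm t0 x0 u)"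
      using BIC t0 u T unfolding BIC_def by auto
    ultimately show False
      by contradiction
  qed
qed

end

locale complete_Lyapunov_system = Lyapunov_system +
  assumes complete: "forward_complete tm"
begin

lemma tm_infinite: "0 \<le> t0 \<Longrightarrow> u \<in> PC \<Longrightarrow> ereal t < tm t0 x0 u"
  using complete by (simp add: forward_complete_def)

lemma V_along_initial_le: "0 \<le> t0 \<Longrightarrow> u \<in> PC \<Longrightarrow> V_along t0 x0 u t0 \<le> \<alpha>2 (norm x0)"
  using V_upper control_system_initial(1)[OF system] by simp

lemma V_along_increase_le_total:
  assumes "0 \<le> t0" "u \<in> PC" "t0 \<le> \<tau>" "\<tau> \<le> \<tau>'" "\<tau>' \<le> t"
  shows "V_along t0 x0 u \<tau>' - V_along t0 x0 u \<tau> \<le> integral {t0..t} (\<lambda>s. chi (norm (u s)))"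
proof -
  have "V_along t0 x0 u \<tau>' - V_along t0 x0 u \<tau> \<le> integral {\<tau>..\<tau>'} (\<lambda>s. chi (norm (u s)))"
    using assms tm_infinite by (intro V_along_increase_le_integral) auto
  also have "\<dots> \<le> integral {t0..t} (\<lambda>s. chi (norm (u s)))"
    using assms class_K_nonneg[OF chi] by (intro integral_subset_le PC_integrable[OF assms(2) chi]) auto
  finally show ?thesis .
qed

lemma V_along_iISS_dichotomy:
  assumes t0: "0 \<le> t0" and u: "u \<in> PC" and "t0 \<le> t" and "0 < c"
    and J: "J = integral {t0..t} (\<lambda>s. chi (norm (u s)))" and "J \<le> \<alpha>2 (norm x0)"
  shows "V_along t0 x0 u t - J \<le> c \<or> V_along t0 x0 u t - J
    \<le> max (\<alpha>2 (norm x0)) 1 - rate_small eta \<alpha>2 c * rate_large eta \<alpha>1 (2 * \<alpha>2 (norm x0)) * (t - t0)"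
proof (cases "\<exists>\<tau>\<in>{t0..t}. V_along t0 x0 u \<tau> < c")
  case True
  then obtain \<tau> where "t0 \<le> \<tau>" "\<tau> \<le> t" "V_along t0 x0 u \<tau> < c"
    by auto
  then show ?thesis
    using V_along_increase_le_total[of t0 u \<tau> t t x0] t0 u J by simp
next
  case False
  define m where "m = rate_small eta \<alpha>2 c * rate_large eta \<alpha>1 (2 * \<alpha>2 (norm x0))"
  have "m \<le> eta (norm (phi \<tau> t0 x0 u))" if "t0 \<le> \<tau>" "\<tau> \<le> t" for \<tau>
    unfolding m_def
  proof (rule rate_product_le_V_along[OF eta t0 \<open>t0 \<le> \<tau>\<close>])
    show "c \<le> V_along t0 x0 u \<tau>"
      using False that by (auto simp: not_less)
    show "V_along t0 x0 u \<tau> \<le> 2 * \<alpha>2 (norm x0)"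
      using V_along_increase_le_total[of t0 u t0 \<tau> t x0] V_along_initial_le[OF t0 u, of x0]
        t0 u that J \<open>J \<le> \<alpha>2 (norm x0)\<close> by simp
  qed
  then have "V_along t0 x0 u t - V_along t0 x0 u t0 \<le> - m * (t - t0) + J"
    unfolding J using t0 u \<open>t0 \<le> t\<close> tm_infinite by (intro V_along_decrease) auto
  then have "V_along t0 x0 u t - J \<le> max (\<alpha>2 (norm x0)) 1 - m * (t - t0)"
    using V_along_initial_le[OF t0 u, of x0] max.cobounded1[of "\<alpha>2 (norm x0)" 1] by linarith
  then show ?thesis
    unfolding m_def by blast
qed

lemma V_along_iISS_bound:
  assumes t0: "0 \<le> t0" and u: "u \<in> PC" and "t0 \<le> t"
  shows "V_along t0 x0 u t
    \<le> decay_bound eta \<alpha>1 \<alpha>2 (norm x0) (t - t0) + 2 * integral {t0..t} (\<lambda>s. chi (norm (u s)))"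
proof -
  define J where "J = integral {t0..t} (\<lambda>s. chi (norm (u s)))"
  have V_le: "V_along t0 x0 u t \<le> \<alpha>2 (norm x0) + J"
    using V_along_increase_le_total[of t0 u t0 t t x0] V_along_initial_le[OF t0 u, of x0]
      t0 u \<open>t0 \<le> t\<close> by (simp add: J_def)
  have "0 \<le> J"
    unfolding J_def using t0 class_K_nonneg[OF chi] by (intro integral_nonneg PC_integrable[OF u chi]) auto
  moreover have "0 \<le> decay_bound eta \<alpha>1 \<alpha>2 (norm x0) (t - t0)"
    by (intro decay_bound_nonneg \<alpha>2_class_K norm_ge_zero)
  moreover have "V_along t0 x0 u t - J \<le> decay_bound eta \<alpha>1 \<alpha>2 (norm x0) (t - t0)" if "J \<le> \<alpha>2 (norm x0)"
    using V_le V_along_iISS_dichotomy[OF t0 u \<open>t0 \<le> t\<close> _ J_def that] by (intro le_decay_bound) auto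
  ultimately show ?thesis
    using V_le unfolding J_def[symmetric] by (cases "J \<le> \<alpha>2 (norm x0)") auto
qed

theorem iISS: "iISS phi"
proof -
  obtain \<psi> where \<psi>: "class_Kinf \<psi>" and \<psi>_inverse: "\<And>\<rho> v. 0 \<le> \<rho> \<Longrightarrow> \<alpha>1 \<rho> \<le> v \<Longrightarrow> \<rho> \<le> \<psi> v"
    using Kinf_inverse_majorant[OF \<alpha>1] by blast
  have \<psi>K: "class_K \<psi>"
    using \<psi> by (rule class_Kinf_imp_class_K)
  have "class_K (\<lambda>v. \<psi> (2 * v))"
    using class_Kinf_scale[OF \<psi>, of 2] by (simp add: class_Kinf_imp_class_K)
  then obtain \<beta> where \<beta>: "class_KL \<beta>"
    and \<beta>_bound: "\<And>r T. 0 \<le> r \<Longrightarrow> 0 \<le> T \<Longrightarrow> \<psi> (2 * decay_bound eta \<alpha>1 \<alpha>2 r T) \<le> \<beta> r T"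
    using KL_majorant_decay_bound[OF eta \<alpha>1 \<alpha>2_class_K] by blast
  have bound: "norm (phi t t0 x0 u)
      \<le> \<beta> (norm x0) (t - t0) + \<psi> (4 * integral {t0..t} (\<lambda>s. chi (norm (u s))))"
    if u: "u \<in> PC" and t0: "0 \<le> t0" and "t0 \<le> t" for x0 u t0 t
  proof -
    define D where "D = decay_bound eta \<alpha>1 \<alpha>2 (norm x0) (t - t0)"
    define J where "J = integral {t0..t} (\<lambda>s. chi (norm (u s)))"
    have "0 \<le> D"
      unfolding D_def by (intro decay_bound_nonneg \<alpha>2_class_K norm_ge_zero)
    have "0 \<le> J"
      unfolding J_def using t0 class_K_nonneg[OF chi] by (intro integral_nonneg PC_integrable[OF u chi]) auto
    have "norm (phi t t0 x0 u) \<le> \<psi> (V_along t0 x0 u t)"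
      using t0 \<open>t0 \<le> t\<close> by (intro \<psi>_inverse V_lower) auto
    also have "\<dots> \<le> \<psi> (max (2 * D) (4 * J))"
      using V_along_iISS_bound[OF t0 u \<open>t0 \<le> t\<close>, of x0] V_lower[of t "phi t t0 x0 u"] t0 \<open>t0 \<le> t\<close>
        class_K_nonneg[OF class_Kinf_imp_class_K[OF \<alpha>1] norm_ge_zero[of "phi t t0 x0 u"]]
      by (intro class_K_mono[OF \<psi>K]) (auto simp: D_def J_def)
    also have "\<dots> \<le> \<psi> (2 * D) + \<psi> (4 * J)"
      using \<open>0 \<le> D\<close> \<open>0 \<le> J\<close> by (intro class_K_max_le_add[OF \<psi>K]) auto
    also have "\<psi> (2 * D) \<le> \<beta> (norm x0) (t - t0)"
      unfolding D_def using \<open>t0 \<le> t\<close> by (intro \<beta>_bound) auto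
    finally show ?thesis
      unfolding J_def by simp
  qed
  show ?thesis
    unfolding iISS_def using \<beta> chi class_Kinf_scale[OF \<psi>, of 4] bound
    by (intro exI[of _ "\<lambda>v. \<psi> (4 * v)"] exI[of _ chi] exI[of _ \<beta>]) auto
qed

end

locale ISS_Lyapunov_system = complete_Lyapunov_system +
  fixes \<zeta> \<gamma> :: "real \<Rightarrow> real"
  assumes \<zeta>: "class_P \<zeta>" and \<gamma>: "class_K \<gamma>"
    and margin: "\<And>s \<rho>. 0 \<le> s \<Longrightarrow> \<gamma> s \<le> \<rho> \<Longrightarrow> chi s + \<zeta> \<rho> \<le> eta \<rho>"
begin

lemma V_along_decrease_above_level:
  assumes t0: "0 \<le> t0" and u: "u \<in> PC" and "t0 \<le> a" "a \<le> b"
    and above: "\<And>\<tau>. a \<le> \<tau> \<Longrightarrow> \<tau> \<le> b \<Longrightarrow> \<alpha>2 (\<gamma> (input_norm u)) \<le> V_along t0 x0 u \<tau>"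
    and rate: "\<And>\<tau>. a \<le> \<tau> \<Longrightarrow> \<tau> \<le> b \<Longrightarrow> m \<le> \<zeta> (norm (phi \<tau> t0 x0 u))"
  shows "V_along t0 x0 u b - V_along t0 x0 u a \<le> - m * (b - a)"
proof -
  define s where "s = input_norm u"
  have "0 \<le> s"
    unfolding s_def using u by (rule PC_input_norm_nonneg)
  have "m + chi s \<le> eta (norm (phi \<tau> t0 x0 u))" if "a \<le> \<tau>" "\<tau> \<le> b" for \<tau>
  proof -
    have "\<alpha>2 (\<gamma> s) \<le> \<alpha>2 (norm (phi \<tau> t0 x0 u))"
      using above[OF that] V_upper[of \<tau> "phi \<tau> t0 x0 u"] that assms(3) t0 by (simp add: s_def)
    then have "\<gamma> s \<le> norm (phi \<tau> t0 x0 u)"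
      using class_K_less[OF \<alpha>2_class_K norm_ge_zero, of "phi \<tau> t0 x0 u" "\<gamma> s"] by (meson not_le)
    then show ?thesis
      using margin[OF \<open>0 \<le> s\<close>] rate[OF that] by fastforce
  qed
  then have "V_along t0 x0 u b - V_along t0 x0 u a
      \<le> - (m + chi s) * (b - a) + integral {a..b} (\<lambda>\<tau>. chi (norm (u \<tau>)))"
    using assms tm_infinite by (intro V_along_decrease) auto
  also have "integral {a..b} (\<lambda>\<tau>. chi (norm (u \<tau>))) \<le> integral {a..b} (\<lambda>_. chi s)"
  proof (rule integral_le[OF PC_integrable[OF u chi] integrable_const_ivl])
    show "0 \<le> a"
      using assms by simp
    show "chi (norm (u \<tau>)) \<le> chi s" if "\<tau> \<in> {a..b}" for \<tau>
      using that assms PC_norm_le_input_norm[OF u, of \<tau>]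
      by (intro class_K_mono[OF chi norm_ge_zero]) (auto simp: s_def)
  qed
  finally show ?thesis
    using \<open>a \<le> b\<close> by (simp add: algebra_simps)
qed

lemma V_along_exit:
  assumes t0: "0 \<le> t0" and u: "u \<in> PC" and "t0 \<le> a" "a \<le> b"
  shows "V_along t0 x0 u b \<le> max (\<alpha>2 (\<gamma> (input_norm u))) (V_along t0 x0 u a)"
proof (rule ccontr)
  define L where "L = max (\<alpha>2 (\<gamma> (input_norm u))) (V_along t0 x0 u a)"
  assume "\<not> V_along t0 x0 u b \<le> max (\<alpha>2 (\<gamma> (input_norm u))) (V_along t0 x0 u a)"
  then have "L < V_along t0 x0 u b"
    unfolding L_def by (simp only: not_le)
  moreover have "continuous_on {a..b} (V_along t0 x0 u)"
    using assms tm_infinite by (intro continuous_on_V_along) auto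
  ultimately obtain s where s: "a \<le> s" "s < b" "V_along t0 x0 u s = L"
    and above: "\<And>\<tau>. s \<le> \<tau> \<Longrightarrow> \<tau> \<le> b \<Longrightarrow> L \<le> V_along t0 x0 u \<tau>"
    using last_crossing[OF \<open>a \<le> b\<close>, of "V_along t0 x0 u" L] by (auto simp: L_def)
  have "V_along t0 x0 u b - V_along t0 x0 u s \<le> - 0 * (b - s)"
  proof (rule V_along_decrease_above_level[OF t0 u])
    show "\<alpha>2 (\<gamma> (input_norm u)) \<le> V_along t0 x0 u \<tau>" if "s \<le> \<tau>" "\<tau> \<le> b" for \<tau>
      using above[OF that] by (simp add: L_def)
  qed (use assms s class_P_nonneg[OF \<zeta>] in auto)
  then show False
    using s \<open>L < V_along t0 x0 u b\<close> by simp
qed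

lemma V_along_le_max_initial:
  assumes "0 \<le> t0" "u \<in> PC" "t0 \<le> \<tau>"
  shows "V_along t0 x0 u \<tau> \<le> max (\<alpha>2 (\<gamma> (input_norm u))) (\<alpha>2 (norm x0))"
  using V_along_exit[OF assms(1,2) order_refl assms(3), of x0] V_along_initial_le[OF assms(1,2), of x0] by simp

lemma V_along_ISS_dichotomy:
  assumes t0: "0 \<le> t0" and u: "u \<in> PC" and "t0 \<le> t" and "0 < c"
    and above: "\<alpha>2 (\<gamma> (input_norm u)) < V_along t0 x0 u t"
  shows "V_along t0 x0 u t \<le> c \<or> V_along t0 x0 u t
    \<le> max (\<alpha>2 (norm x0)) 1 - rate_small \<zeta> \<alpha>2 c * rate_large \<zeta> \<alpha>1 (2 * \<alpha>2 (norm x0)) * (t - t0)"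
proof (cases "\<exists>\<tau>\<in>{t0..t}. V_along t0 x0 u \<tau> < max c (\<alpha>2 (\<gamma> (input_norm u)))")
  case True
  then obtain \<tau> where "t0 \<le> \<tau>" "\<tau> \<le> t" "V_along t0 x0 u \<tau> < max c (\<alpha>2 (\<gamma> (input_norm u)))"
    by auto
  then show ?thesis
    using V_along_exit[OF t0 u, of \<tau> t x0] above by auto
next
  case False
  define m where "m = rate_small \<zeta> \<alpha>2 c * rate_large \<zeta> \<alpha>1 (2 * \<alpha>2 (norm x0))"
  have V_le: "V_along t0 x0 u \<tau> \<le> \<alpha>2 (norm x0)" if "t0 \<le> \<tau>" for \<tau>
    using V_along_le_max_initial[OF t0 u that, of x0] V_along_le_max_initial[OF t0 u \<open>t0 \<le> t\<close>, of x0] above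
    by linarith
  have "V_along t0 x0 u t - V_along t0 x0 u t0 \<le> - m * (t - t0)"
  proof (rule V_along_decrease_above_level[OF t0 u order_refl \<open>t0 \<le> t\<close>])
    show "\<alpha>2 (\<gamma> (input_norm u)) \<le> V_along t0 x0 u \<tau>" if "t0 \<le> \<tau>" "\<tau> \<le> t" for \<tau>
      using False that by (auto simp: not_less)
    show "m \<le> \<zeta> (norm (phi \<tau> t0 x0 u))" if "t0 \<le> \<tau>" "\<tau> \<le> t" for \<tau>
      unfolding m_def
    proof (rule rate_product_le_V_along[OF \<zeta> t0 \<open>t0 \<le> \<tau>\<close>])
      show "c \<le> V_along t0 x0 u \<tau>"
        using False that by (auto simp: not_less)
      show "V_along t0 x0 u \<tau> \<le> 2 * \<alpha>2 (norm x0)"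
        using V_le[OF \<open>t0 \<le> \<tau>\<close>] class_K_nonneg[OF \<alpha>2_class_K norm_ge_zero[of x0]] by simp
    qed
  qed
  then have "V_along t0 x0 u t \<le> max (\<alpha>2 (norm x0)) 1 - m * (t - t0)"
    using V_along_initial_le[OF t0 u, of x0] max.cobounded1[of "\<alpha>2 (norm x0)" 1] by linarith
  then show ?thesis
    unfolding m_def by blast
qed

lemma V_along_ISS_bound:
  assumes t0: "0 \<le> t0" and u: "u \<in> PC" and "t0 \<le> t"
  shows "V_along t0 x0 u t \<le> max (\<alpha>2 (\<gamma> (input_norm u))) (decay_bound \<zeta> \<alpha>1 \<alpha>2 (norm x0) (t - t0))"
proof (cases "V_along t0 x0 u t \<le> \<alpha>2 (\<gamma> (input_norm u))")
  case False
  then have "V_along t0 x0 u t \<le> \<alpha>2 (norm x0)"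
    using V_along_le_max_initial[OF t0 u \<open>t0 \<le> t\<close>, of x0] by linarith
  then have "V_along t0 x0 u t \<le> decay_bound \<zeta> \<alpha>1 \<alpha>2 (norm x0) (t - t0)"
    using V_along_ISS_dichotomy[OF t0 u \<open>t0 \<le> t\<close>] False by (intro le_decay_bound) auto
  then show ?thesis
    by simp
qed simp

theorem ISS: "ISS phi tm"
proof -
  obtain \<psi> where \<psi>: "class_Kinf \<psi>" and \<psi>_inverse: "\<And>\<rho> v. 0 \<le> \<rho> \<Longrightarrow> \<alpha>1 \<rho> \<le> v \<Longrightarrow> \<rho> \<le> \<psi> v"
    using Kinf_inverse_majorant[OF \<alpha>1] by blast
  have \<psi>K: "class_K \<psi>"
    using \<psi> by (rule class_Kinf_imp_class_K)
  obtain \<beta> where \<beta>: "class_KL \<beta>"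
    and \<beta>_bound: "\<And>r T. 0 \<le> r \<Longrightarrow> 0 \<le> T \<Longrightarrow> \<psi> (decay_bound \<zeta> \<alpha>1 \<alpha>2 r T) \<le> \<beta> r T"
    by (rule KL_majorant_decay_bound[OF \<zeta> \<alpha>1 \<alpha>2_class_K \<psi>K]) blast
  have bound: "norm (phi t t0 x0 u) \<le> \<beta> (norm x0) (t - t0) + \<psi> (\<alpha>2 (\<gamma> (input_norm u)))"
    if u: "u \<in> PC" and t0: "0 \<le> t0" and "t0 \<le> t" for x0 u t0 t
  proof -
    define D where "D = decay_bound \<zeta> \<alpha>1 \<alpha>2 (norm x0) (t - t0)"
    define level where "level = \<alpha>2 (\<gamma> (input_norm u))"
    have "0 \<le> D"
      unfolding D_def by (intro decay_bound_nonneg \<alpha>2_class_K norm_ge_zero)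
    have "0 \<le> level"
      unfolding level_def using PC_input_norm_nonneg[OF u]
      by (intro class_K_nonneg[OF \<alpha>2_class_K] class_K_nonneg[OF \<gamma>])
    have "norm (phi t t0 x0 u) \<le> \<psi> (V_along t0 x0 u t)"
      using t0 \<open>t0 \<le> t\<close> by (intro \<psi>_inverse V_lower) auto
    also have "\<dots> \<le> \<psi> (max level D)"
      using V_along_ISS_bound[OF t0 u \<open>t0 \<le> t\<close>, of x0] V_lower[of t "phi t t0 x0 u"] t0 \<open>t0 \<le> t\<close>
        class_K_nonneg[OF class_Kinf_imp_class_K[OF \<alpha>1] norm_ge_zero[of "phi t t0 x0 u"]]
      by (intro class_K_mono[OF \<psi>K]) (auto simp: D_def level_def)
    also have "\<dots> \<le> \<psi> level + \<psi> D"
      using \<open>0 \<le> level\<close> \<open>0 \<le> D\<close> by (rule class_K_max_le_add[OF \<psi>K])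
    also have "\<psi> D \<le> \<beta> (norm x0) (t - t0)"
      unfolding D_def using \<open>t0 \<le> t\<close> by (intro \<beta>_bound) auto
    finally show ?thesis
      unfolding level_def by simp
  qed
  have "class_K (\<lambda>s. \<psi> (\<alpha>2 (\<gamma> s)))"
    by (rule class_K_comp[OF class_K_comp[OF \<gamma> \<alpha>2_class_K] \<psi>K])
  then show ?thesis
    unfolding ISS_def using \<beta> bound complete
    by (intro exI[of _ \<beta>] exI[of _ "\<lambda>s. \<psi> (\<alpha>2 (\<gamma> s))"]) (auto simp: forward_complete_def)
qed

end

theorem coercive_iISS_LF_imp_forward_complete_iISS:
  assumes "control_system phi tm" "BIC phi tm" "coercive_iISS_LF_with phi V eta chi"
  shows "forward_complete tm \<and> iISS phi"
proof -
  obtain \<alpha>1 \<alpha>2 where "Lyapunov_system phi tm V \<alpha>1 \<alpha>2 eta chi"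
    using coercive_iISS_LF_imp_Lyapunov_system[OF assms(1,3)] by blast
  then interpret Lyapunov_system phi tm V \<alpha>1 \<alpha>2 eta chi .
  have complete: "forward_complete tm"
    using assms(2) by (rule forward_complete)
  then interpret complete_Lyapunov_system phi tm V \<alpha>1 \<alpha>2 eta chi
    by unfold_locales
  from complete iISS show ?thesis ..
qed

theorem coercive_ISS_LF_diss_imp_ISS:
  assumes "control_system phi tm" "BIC phi tm" "coercive_iISS_LF_with phi V eta chi"
    and dissipative: "filterlim eta at_top at_top \<or>
      Liminf at_top (\<lambda>\<tau>. ereal (eta \<tau>)) \<ge> Lim at_top (\<lambda>\<tau>. ereal (chi \<tau>))"
  shows "ISS phi tm"
proof -
  obtain \<alpha>1 \<alpha>2 where "Lyapunov_system phi tm V \<alpha>1 \<alpha>2 eta chi"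
    using coercive_iISS_LF_imp_Lyapunov_system[OF assms(1,3)] by blast
  then interpret Lyapunov_system phi tm V \<alpha>1 \<alpha>2 eta chi .
  obtain \<zeta> \<gamma> where "class_P \<zeta>" "class_K \<gamma>" "\<And>s \<rho>. 0 \<le> s \<Longrightarrow> \<gamma> s \<le> \<rho> \<Longrightarrow> chi s + \<zeta> \<rho> \<le> eta \<rho>"
    using dissipative_gain_margin[OF eta chi dissipative] by blast
  moreover have "forward_complete tm"
    using assms(2) by (rule forward_complete)
  ultimately interpret ISS_Lyapunov_system phi tm V \<alpha>1 \<alpha>2 eta chi \<zeta> \<gamma>
    by unfold_locales
  show ?thesis
    by (rule ISS)
qed

theorem mainTheorem4:
  fixes phi :: "real \<Rightarrow> real \<Rightarrow> 'x::real_normed_vector \<Rightarrow> (real \<Rightarrow> 'u::real_normed_vector) \<Rightarrow> 'x"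
    and tm :: "real \<Rightarrow> 'x \<Rightarrow> (real \<Rightarrow> 'u) \<Rightarrow> ereal"
  assumes "control_system phi tm"
    and "BIC phi tm"
  shows "((\<exists>V. coercive_iISS_LF phi V) \<longrightarrow> forward_complete tm \<and> iISS phi)
       \<and> ((\<exists>V. coercive_ISS_LF_diss phi V) \<longrightarrow> ISS phi tm)"
  using coercive_iISS_LF_imp_forward_complete_iISS[OF assms] coercive_ISS_LF_diss_imp_ISS[OF assms]
  unfolding coercive_iISS_LF_def coercive_ISS_LF_diss_def by blast

end
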